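(* Let $n,p,\ell$ be positive integers, $A\in\mathbb{R}^{n\times n}$, $C\in\mathbb{R}^{p\times n}$, $X_0,W\in\mathbb{R}^{n\times n}$ symmetric positive definite, and $V=\operatorname{diag}(\sigma_{v,1}^2,\dots,\sigma_{v,p}^2)$ with all $\sigma_{v,i}>0$. Let $\mathcal{I}=\{1,\dots,p\}$ and, for $\mathcal{S}\subseteq\mathcal{I}$, let $L$, $U_{\mathcal{S}}$, $J(\mathcal{S})$ and $f(\mathcal{S})=J(\emptyset)-J(\mathcal{S})$ be as defined in the context. Define $$\underline{\gamma}:=\frac{\lambda_{\min}(L)}{\lambda_{\max}(L+U_{\mathcal{I}})},\qquad \overline{\alpha}:=1-\frac{\{\lambda_{\min}(L)\}^2}{\{\lambda_{\max}(L+U_{\mathcal{I}})\}^2}.$$ Then $f:2^{\mathcal{I}}\to\mathbb{R}$ is nondecreasing (i.e. $f(\mathcal{S}_1)\le f(\mathcal{S}_2)$ whenever $\mathcal{S}_1\subseteq\mathcal{S}_2\subseteq\mathcal{I}$), and its submodularity ratio $\gamma$ and curvature $\alpha$ satisfy $$\gamma\ge\underline{\gamma}>0,\qquad \alpha\le\overline{\alpha}<1.$$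
   Context: Let $\Phi\in\mathbb{R}^{n\ell\times n\ell}$ be the block lower-triangular matrix whose $(i,j)$ block ($i,j=1,\dots,\ell$) is $A^{i-j}$ for $i\ge j$ (with $A^0=I_n$) and $0$ for $i<j$. Let $Z=\operatorname{diag}(X_0,W,\dots,W)$ (block diagonal with $\ell$ blocks) and $L:=Z^{-1}$. For $\mathcal{S}=\{\theta_1<\theta_2<\dots<\theta_s\}\subseteq\mathcal{I}$, the selection matrix $S_{\mathcal{S}}\in\mathbb{R}^{s\times p}$ has $[S_{\mathcal{S}}]_{i,j}=1$ if $j=\theta_i$ and $0$ otherwise; set $G=\{I_\ell\otimes(S_{\mathcal{S}}C)\}\Phi$, $V_{\mathcal{S}}=I_\ell\otimes(S_{\mathcal{S}}VS_{\mathcal{S}}^\top)$ and $U_{\mathcal{S}}:=G^\top V_{\mathcal{S}}^{-1}G$, with the convention $U_\emptyset=0$. (Equivalently $U_{\mathcal{S}}=\sum_{i\in\mathcal{S}}\sigma_{v,i}^{-2}\Phi^\top(I_\ell\otimes C)^\top(I_\ell\otimes I^{(i)})(I_\ell\otimes C)\Phi$, where $I^{(i)}$ is the $p\times p$ matrix with a single $1$ in position $(i,i)$.) Define $J(\mathcal{S}):=\operatorname{tr}[(L+U_{\mathcal{S}})^{-1}]$ (this is the smoothing mean square error over times $0,\dots,\ell-1$ for the system $x_{k+1}=Ax_k+w_k$, $y_k=Cx_k+v_k$ using only outputs indexed by $\mathcal{S}$, with $\mathrm{Cov}[x_0]=X_0$, $\mathrm{Cov}[w_k]=W$, $\mathrm{Cov}[v_k]=V$),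 and $f(\mathcal{S}):=-J(\mathcal{S})+J(\emptyset)$. $\lambda_{\min},\lambda_{\max}$ denote minimum and maximum eigenvalues. For $\Omega,\mathcal{S}\subseteq\mathcal{I}$ let $\rho_\Omega(\mathcal{S}):=f(\mathcal{S}\cup\Omega)-f(\mathcal{S})$. The submodularity ratio of $f$ is the largest scalar $\gamma$ such that $\sum_{\omega\in\Omega\setminus\mathcal{S}}\rho_{\{\omega\}}(\mathcal{S})\ge\gamma\,\rho_\Omega(\mathcal{S})$ for all $\Omega,\mathcal{S}\subseteq\mathcal{I}$. The curvature of $f$ is the smallest scalar $\alpha$ such that $\rho_{\{j\}}(\mathcal{S}\setminus\{j\}\cup\Omega)\ge(1-\alpha)\rho_{\{j\}}(\mathcal{S}\setminus\{j\})$ for all $\Omega,\mathcal{S}\subseteq\mathcal{I}$ and all $j\in\mathcal{S}\setminus\Omega$. *)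

theory Defs
  imports "Jordan_Normal_Form.Matrix" "Jordan_Normal_Form.Char_Poly" "HOL-Library.Extended_Real"
begin

definition mat_trace :: "real mat \<Rightarrow> real" where
  "mat_trace M = (\<Sum>i<dim_row M. M $$ (i, i))"

definition mat_inv :: "real mat \<Rightarrow> real mat" where
  "mat_inv M = (SOME B. B \<in> carrier_mat (dim_row M) (dim_row M) \<and>
      M * B = 1\<^sub>m (dim_row M) \<and> B * M = 1\<^sub>m (dim_row M))"

definition sym_posdef :: "real mat \<Rightarrow> nat \<Rightarrow> bool" where
  "sym_posdef M k \<longleftrightarrow> M \<in> carrier_mat k k \<and> transpose_mat M = M \<and>
      (\<forall>v \<in> carrier_vec k. v \<noteq> 0\<^sub>v k \<longrightarrow> v \<bullet> (M *\<^sub>v v) > 0)"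

definition lambda_min :: "real mat \<Rightarrow> real" where
  "lambda_min M = Min {k. eigenvalue M k}"

definition lambda_max :: "real mat \<Rightarrow> real" where
  "lambda_max M = Max {k. eigenvalue M k}"

(* I_l \<otimes> M : block diagonal with l copies of M *)
definition blockdiag :: "nat \<Rightarrow> real mat \<Rightarrow> real mat" where
  "blockdiag l M = mat (l * dim_row M) (l * dim_col M)
     (\<lambda>(r, c). if r div dim_row M = c div dim_col M
               then M $$ (r mod dim_row M, c mod dim_col M) else 0)"

(* Phi: block lower triangular, (i,j) block = A^(i-j) for i \<ge> j *)
definition Phi :: "nat \<Rightarrow> nat \<Rightarrow> real mat \<Rightarrow> real mat" where
  "Phi n l A = mat (n * l) (n * l)
     (\<lambda>(r, c). if c div n \<le> r div n
               then (A ^\<^sub>m (r div n - c div n)) $$ (r mod n, c mod n) else 0)"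

(* Z = diag(X0, W, ..., W) with l blocks *)
definition Zmat :: "nat \<Rightarrow> nat \<Rightarrow> real mat \<Rightarrow> real mat \<Rightarrow> real mat" where
  "Zmat n l X0 W = mat (n * l) (n * l)
     (\<lambda>(r, c). if r div n = c div n
               then (if r div n = 0 then X0 else W) $$ (r mod n, c mod n) else 0)"

definition Lmat :: "nat \<Rightarrow> nat \<Rightarrow> real mat \<Rightarrow> real mat \<Rightarrow> real mat" where
  "Lmat n l X0 W = mat_inv (Zmat n l X0 W)"

(* selection matrix S_S (indices 0-based: row i selects the i-th smallest element of S) *)
definition sel_mat :: "nat \<Rightarrow> nat set \<Rightarrow> real mat" where
  "sel_mat p S = mat (card S) p (\<lambda>(i, j). if j = sorted_list_of_set S ! i then 1 else 0)"

definition Vmat :: "nat \<Rightarrow> (nat \<Rightarrow> real) \<Rightarrow> real mat" where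
  "Vmat p \<sigma> = mat p p (\<lambda>(i, j). if i = j then (\<sigma> i)\<^sup>2 else 0)"

definition Umat :: "nat \<Rightarrow> nat \<Rightarrow> nat \<Rightarrow> real mat \<Rightarrow> real mat \<Rightarrow> (nat \<Rightarrow> real)
                    \<Rightarrow> nat set \<Rightarrow> real mat" where
  "Umat n p l A C \<sigma> S =
     (if S = {} then 0\<^sub>m (n * l) (n * l)
      else let G = blockdiag l (sel_mat p S * C) * Phi n l A;
               VS = blockdiag l (sel_mat p S * Vmat p \<sigma> * transpose_mat (sel_mat p S))
           in transpose_mat G * mat_inv VS * G)"

definition Jfun :: "nat \<Rightarrow> nat \<Rightarrow> nat \<Rightarrow> real mat \<Rightarrow> real mat \<Rightarrow> real mat \<Rightarrow> real mat
                    \<Rightarrow> (nat \<Rightarrow> real) \<Rightarrow> nat set \<Rightarrow> real" where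
  "Jfun n p l A C X0 W \<sigma> S = mat_trace (mat_inv (Lmat n l X0 W + Umat n p l A C \<sigma> S))"

definition ffun :: "nat \<Rightarrow> nat \<Rightarrow> nat \<Rightarrow> real mat \<Rightarrow> real mat \<Rightarrow> real mat \<Rightarrow> real mat
                    \<Rightarrow> (nat \<Rightarrow> real) \<Rightarrow> nat set \<Rightarrow> real" where
  "ffun n p l A C X0 W \<sigma> S = Jfun n p l A C X0 W \<sigma> {} - Jfun n p l A C X0 W \<sigma> S"

definition rho :: "(nat set \<Rightarrow> real) \<Rightarrow> nat set \<Rightarrow> nat set \<Rightarrow> real" where
  "rho f \<Omega> S = f (S \<union> \<Omega>) - f S"

(* largest gamma (in the extended reals, +\<infinity> if unbounded) *)
definition submod_ratio :: "(nat set \<Rightarrow> real) \<Rightarrow> nat set \<Rightarrow> ereal" where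
  "submod_ratio f I = Sup (ereal ` {\<gamma>. \<forall>\<Omega> S. \<Omega> \<subseteq> I \<longrightarrow> S \<subseteq> I \<longrightarrow>
        (\<Sum>\<omega>\<in>\<Omega> - S. rho f {\<omega>} S) \<ge> \<gamma> * rho f \<Omega> S})"

(* smallest alpha (in the extended reals, -\<infinity> if unbounded) *)
definition curvature :: "(nat set \<Rightarrow> real) \<Rightarrow> nat set \<Rightarrow> ereal" where
  "curvature f I = Inf (ereal ` {\<alpha>. \<forall>\<Omega> S j. \<Omega> \<subseteq> I \<longrightarrow> S \<subseteq> I \<longrightarrow> j \<in> S - \<Omega> \<longrightarrow>
        rho f {j} ((S - {j}) \<union> \<Omega>) \<ge> (1 - \<alpha>) * rho f {j} (S - {j})})"

end

(*
  Write M S = L + U S for the information matrix of the outputs S, so that J S = tr (M S)^-1.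
  Adding outputs adds a positive semidefinite sum of rank-one terms g g^T to M S. For
  B = A + D with D positive semidefinite, the resolvent identity A^-1 - B^-1 = A^-1 D B^-1
  bounds tr A^-1 - tr B^-1 below by tr (B^-1 D B^-1) >= 0 (monotonicity) and above by
  tr (A^-1 D A^-1), and the spectral bounds lambda_min L <= M <= lambda_max (M I) give the
  lower bound (lambda_min L / lambda_max (M I)) tr (A^-1 D A^-1) as well. Since
  tr (A^-1 D A^-1) is additive in the rank-one terms of D, comparing a set of outputs with its
  single elements yields the submodularity ratio. For a single output j with rows g, the gain
  lies between sum |g|^2 / lambda_max^2 and sum |g|^2 / lambda_min^2 whatever the current set
  is, which yields the curvature bound.
*)

theory Submission
  imports Defs
begin

section \<open>Quadratic forms of real matrices\<close>

definition sym_psd :: "real mat \<Rightarrow> nat \<Rightarrow> bool" where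
  "sym_psd M k \<longleftrightarrow> M \<in> carrier_mat k k \<and> transpose_mat M = M \<and>
      (\<forall>v \<in> carrier_vec k. v \<bullet> (M *\<^sub>v v) \<ge> 0)"

lemma scalar_prod_self_nonneg: "(v :: real vec) \<bullet> v \<ge> 0"
  using conjugate_square_ge_0_vec[of v] by simp

lemma scalar_prod_self_pos: "(v :: real vec) \<in> carrier_vec N \<Longrightarrow> v \<noteq> 0\<^sub>v N \<Longrightarrow> v \<bullet> v > 0"
  using conjugate_square_greater_0_vec[of v N] by simp

lemma scalar_prod_sum_lessThan: "w \<in> carrier_vec N \<Longrightarrow> v \<bullet> w = (\<Sum>i<N. v $ i * w $ i)"
  unfolding scalar_prod_def by (simp add: lessThan_atLeast0)

lemma square_index_le_scalar_prod_self:
  fixes x :: "real vec"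
  assumes "x \<in> carrier_vec N" and "i < N"
  shows "(x $ i)\<^sup>2 \<le> x \<bullet> x"
proof -
  have "(x $ i)\<^sup>2 \<le> (\<Sum>j<N. (x $ j)\<^sup>2)"
    using assms(2) by (intro member_le_sum) auto
  then show ?thesis using assms(1) by (simp add: scalar_prod_sum_lessThan power2_eq_square)
qed

lemma quadratic_form_double_sum:
  fixes A :: "real mat"
  assumes A: "A \<in> carrier_mat N N" and x: "x \<in> carrier_vec N"
  shows "x \<bullet> (A *\<^sub>v x) = (\<Sum>i<N. \<Sum>j<N. x $ i * A $$ (i, j) * x $ j)"
proof -
  have "x \<bullet> (A *\<^sub>v x) = (\<Sum>i<N. x $ i * (\<Sum>j<N. A $$ (i, j) * x $ j))"
    using A x by (simp add: scalar_prod_sum_lessThan[of _ N])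
  then show ?thesis by (simp add: sum_distrib_left mult.assoc)
qed

lemma abs_quadratic_form_le:
  fixes A :: "real mat"
  assumes A: "A \<in> carrier_mat N N" and x: "x \<in> carrier_vec N"
  shows "\<bar>x \<bullet> (A *\<^sub>v x)\<bar> \<le> (\<Sum>i<N. \<Sum>j<N. \<bar>A $$ (i, j)\<bar>) * (x \<bullet> x)"
proof -
  have entry: "\<bar>x $ i * A $$ (i, j) * x $ j\<bar> \<le> \<bar>A $$ (i, j)\<bar> * (x \<bullet> x)" if "i < N" "j < N" for i j
  proof -
    have "2 * \<bar>x $ i * x $ j\<bar> \<le> (x $ i)\<^sup>2 + (x $ j)\<^sup>2"
      using sum_squares_bound[of "\<bar>x $ i\<bar>" "\<bar>x $ j\<bar>"] by (simp add: abs_mult power2_eq_square)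
    then have "\<bar>x $ i * x $ j\<bar> \<le> x \<bullet> x"
      using square_index_le_scalar_prod_self[OF x that(1)] square_index_le_scalar_prod_self[OF x that(2)]
      by linarith
    then have "\<bar>A $$ (i, j)\<bar> * \<bar>x $ i * x $ j\<bar> \<le> \<bar>A $$ (i, j)\<bar> * (x \<bullet> x)"
      by (simp add: mult_left_mono)
    then show ?thesis by (simp add: abs_mult algebra_simps)
  qed
  have "(\<Sum>i<N. \<bar>\<Sum>j<N. x $ i * A $$ (i, j) * x $ j\<bar>) \<le> (\<Sum>i<N. \<Sum>j<N. \<bar>A $$ (i, j)\<bar> * (x \<bullet> x))"
    by (intro sum_mono order_trans[OF sum_abs]) (auto intro: entry)
  then have "\<bar>x \<bullet> (A *\<^sub>v x)\<bar> \<le> (\<Sum>i<N. \<Sum>j<N. \<bar>A $$ (i, j)\<bar> * (x \<bullet> x))"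
    unfolding quadratic_form_double_sum[OF A x] by (rule order_trans[OF sum_abs])
  then show ?thesis by (simp add: sum_distrib_right)
qed

lemma scalar_prod_add_mult_mat_vec:
  fixes A D :: "real mat"
  assumes "A \<in> carrier_mat N N" "D \<in> carrier_mat N N" "x \<in> carrier_vec N" "y \<in> carrier_vec N"
  shows "y \<bullet> ((A + D) *\<^sub>v x) = y \<bullet> (A *\<^sub>v x) + y \<bullet> (D *\<^sub>v x)"
  using assms by (simp add: add_mult_distrib_mat_vec scalar_prod_add_distrib[of y N])

lemma sym_mat_scalar_prod_swap:
  fixes M :: "real mat"
  assumes "M \<in> carrier_mat N N" "transpose_mat M = M" "x \<in> carrier_vec N" "y \<in> carrier_vec N"
  shows "x \<bullet> (M *\<^sub>v y) = (M *\<^sub>v x) \<bullet> y"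
  using transpose_vec_mult_scalar[of M N N y x] assms by simp

lemma quadratic_form_line:
  fixes R :: "real mat"
  assumes R: "R \<in> carrier_mat N N" and s: "transpose_mat R = R"
    and x: "x \<in> carrier_vec N" and y: "y \<in> carrier_vec N"
  shows "(x + t \<cdot>\<^sub>v y) \<bullet> (R *\<^sub>v (x + t \<cdot>\<^sub>v y))
       = x \<bullet> (R *\<^sub>v x) + 2 * t * (x \<bullet> (R *\<^sub>v y)) + t\<^sup>2 * (y \<bullet> (R *\<^sub>v y))"
proof -
  have ty: "t \<cdot>\<^sub>v y \<in> carrier_vec N" and Rx: "R *\<^sub>v x \<in> carrier_vec N"
    and Ry: "R *\<^sub>v y \<in> carrier_vec N" using R x y by auto
  have "R *\<^sub>v (x + t \<cdot>\<^sub>v y) = R *\<^sub>v x + t \<cdot>\<^sub>v (R *\<^sub>v y)"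
    using R x y by (simp add: mult_add_distrib_mat_vec mult_mat_vec)
  moreover have "(x + t \<cdot>\<^sub>v y) \<bullet> (R *\<^sub>v x + t \<cdot>\<^sub>v (R *\<^sub>v y))
      = x \<bullet> (R *\<^sub>v x) + t * (x \<bullet> (R *\<^sub>v y)) + t * (y \<bullet> (R *\<^sub>v x)) + t * t * (y \<bullet> (R *\<^sub>v y))"
    using x y Rx Ry ty by (simp add: add_scalar_prod_distrib scalar_prod_add_distrib algebra_simps)
  moreover have "y \<bullet> (R *\<^sub>v x) = x \<bullet> (R *\<^sub>v y)"
    using sym_mat_scalar_prod_swap[OF R s y x] comm_scalar_prod[OF Ry x] by simp
  ultimately show ?thesis by (simp add: power2_eq_square algebra_simps)
qed

lemma nonneg_quadratic_discriminant:
  fixes a b c :: real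
  assumes a: "a \<ge> 0" and nonneg: "\<And>t. c + 2 * b * t + a * t\<^sup>2 \<ge> 0"
  shows "b\<^sup>2 \<le> a * c"
proof (cases "a = 0")
  case True
  have "b = 0"
  proof (rule ccontr)
    assume "b \<noteq> 0"
    moreover have "c + 2 * b * (- (c + 1) / (2 * b)) + a * (- (c + 1) / (2 * b))\<^sup>2 \<ge> 0"
      by (rule nonneg)
    ultimately show False using True by (simp add: field_simps)
  qed
  then show ?thesis using True by simp
next
  case False
  with a have "a > 0" by simp
  moreover have "c + 2 * b * (- b / a) + a * (- b / a)\<^sup>2 \<ge> 0" by (rule nonneg)
  ultimately show ?thesis by (simp add: field_simps power2_eq_square)
qed

lemma sym_psd_cauchy_schwarz:
  assumes R: "sym_psd R N" and x: "x \<in> carrier_vec N" and y: "y \<in> carrier_vec N"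
  shows "(x \<bullet> (R *\<^sub>v y))\<^sup>2 \<le> (x \<bullet> (R *\<^sub>v x)) * (y \<bullet> (R *\<^sub>v y))"
proof -
  have Rc: "R \<in> carrier_mat N N" and Rs: "transpose_mat R = R"
    and Rp: "\<And>z. z \<in> carrier_vec N \<Longrightarrow> z \<bullet> (R *\<^sub>v z) \<ge> 0"
    using R unfolding sym_psd_def by auto
  have "(x \<bullet> (R *\<^sub>v y))\<^sup>2 \<le> (y \<bullet> (R *\<^sub>v y)) * (x \<bullet> (R *\<^sub>v x))"
  proof (rule nonneg_quadratic_discriminant)
    show "0 \<le> y \<bullet> (R *\<^sub>v y)" using Rp y by simp
    fix t :: real
    have "(x + t \<cdot>\<^sub>v y) \<bullet> (R *\<^sub>v (x + t \<cdot>\<^sub>v y)) \<ge> 0" using Rp x y by simp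
    then show "x \<bullet> (R *\<^sub>v x) + 2 * (x \<bullet> (R *\<^sub>v y)) * t + y \<bullet> (R *\<^sub>v y) * t\<^sup>2 \<ge> 0"
      using quadratic_form_line[OF Rc Rs x y, of t] by (simp add: algebra_simps)
  qed
  then show ?thesis by (simp add: algebra_simps)
qed

lemma sym_psd_one: "sym_psd (1\<^sub>m N) N"
  unfolding sym_psd_def by (simp add: scalar_prod_self_nonneg)

lemma cauchy_schwarz_vec:
  fixes x y :: "real vec"
  assumes "x \<in> carrier_vec N" "y \<in> carrier_vec N"
  shows "(x \<bullet> y)\<^sup>2 \<le> (x \<bullet> x) * (y \<bullet> y)"
  using sym_psd_cauchy_schwarz[OF sym_psd_one assms] assms by simp

lemma sym_posdef_imp_sym_psd:
  assumes "sym_posdef A N"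
  shows "sym_psd A N"
proof -
  have "v \<bullet> (A *\<^sub>v v) \<ge> 0" if "v \<in> carrier_vec N" for v
    using assms that unfolding sym_posdef_def by (cases "v = 0\<^sub>v N") (auto intro: less_imp_le)
  then show ?thesis using assms unfolding sym_psd_def sym_posdef_def by auto
qed

lemma sym_posdef_add_sym_psd:
  assumes A: "sym_posdef A N" and B: "sym_psd B N"
  shows "sym_posdef (A + B) N"
proof -
  have "v \<bullet> ((A + B) *\<^sub>v v) = v \<bullet> (A *\<^sub>v v) + v \<bullet> (B *\<^sub>v v)" if "v \<in> carrier_vec N" for v
    using A B that unfolding sym_psd_def sym_posdef_def by (auto simp: scalar_prod_add_mult_mat_vec)
  then show ?thesis using A B unfolding sym_psd_def sym_posdef_def
    by (auto simp: transpose_add add_pos_nonneg)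
qed

section \<open>Inverses of positive definite matrices\<close>

lemma mat_inv_eqI:
  fixes M B :: "real mat"
  assumes M: "M \<in> carrier_mat k k" and B: "B \<in> carrier_mat k k"
    and MB: "M * B = 1\<^sub>m k" and BM: "B * M = 1\<^sub>m k"
  shows "mat_inv M = B"
proof -
  have "\<exists>B. B \<in> carrier_mat k k \<and> M * B = 1\<^sub>m k \<and> B * M = 1\<^sub>m k" using B MB BM by blast
  then have I: "mat_inv M \<in> carrier_mat k k" "M * mat_inv M = 1\<^sub>m k"
    unfolding mat_inv_def using M by (metis (mono_tags, lifting) carrier_matD(1) someI_ex)+
  have "mat_inv M = (B * M) * mat_inv M" using BM I by simp
  also have "\<dots> = B * (M * mat_inv M)" using M B I by (meson assoc_mult_mat)
  finally show ?thesis using I B by simp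
qed

lemma sym_posdef_mat_inv:
  assumes pd: "sym_posdef M N"
  shows "mat_inv M \<in> carrier_mat N N" "M * mat_inv M = 1\<^sub>m N" "mat_inv M * M = 1\<^sub>m N"
proof -
  have M: "M \<in> carrier_mat N N" using pd unfolding sym_posdef_def by auto
  have "det M \<noteq> 0"
  proof
    assume "det M = 0"
    then obtain v where "v \<in> carrier_vec N" "v \<noteq> 0\<^sub>v N" "M *\<^sub>v v = 0\<^sub>v N"
      using det_0_iff_vec_prod_zero[OF M] by auto
    then show False using pd unfolding sym_posdef_def by fastforce
  qed
  from det_non_zero_imp_unit[OF M this, of "()"]
  obtain B where B: "B \<in> carrier_mat N N" "M * B = 1\<^sub>m N" "B * M = 1\<^sub>m N"
    unfolding Units_def ring_mat_def by auto
  moreover have "mat_inv M = B" using mat_inv_eqI[OF M B] .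
  ultimately show "mat_inv M \<in> carrier_mat N N" "M * mat_inv M = 1\<^sub>m N" "mat_inv M * M = 1\<^sub>m N"
    by simp_all
qed

lemma sym_posdef_mat_inv_cancel:
  assumes pd: "sym_posdef M N" and x: "x \<in> carrier_vec N"
  shows "mat_inv M *\<^sub>v (M *\<^sub>v x) = x" "M *\<^sub>v (mat_inv M *\<^sub>v x) = x"
proof -
  have M: "M \<in> carrier_mat N N" using pd unfolding sym_posdef_def by auto
  note I = sym_posdef_mat_inv[OF pd]
  show "mat_inv M *\<^sub>v (M *\<^sub>v x) = x"
    unfolding assoc_mult_mat_vec[OF I(1) M x, symmetric] I(3) using x by simp
  show "M *\<^sub>v (mat_inv M *\<^sub>v x) = x"
    unfolding assoc_mult_mat_vec[OF M I(1) x, symmetric] I(2) using x by simp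
qed

lemma sym_posdef_mat_inv_sym:
  assumes pd: "sym_posdef M N"
  shows "transpose_mat (mat_inv M) = mat_inv M"
proof -
  have M: "M \<in> carrier_mat N N" and s: "transpose_mat M = M" using pd unfolding sym_posdef_def by auto
  note I = sym_posdef_mat_inv[OF pd]
  have "M * transpose_mat (mat_inv M) = 1\<^sub>m N" "transpose_mat (mat_inv M) * M = 1\<^sub>m N"
    using arg_cong[OF I(3), of transpose_mat] arg_cong[OF I(2), of transpose_mat]
      transpose_mult[OF I(1) M] transpose_mult[OF M I(1)] s by simp_all
  moreover have "transpose_mat (mat_inv M) \<in> carrier_mat N N" using I(1) by simp
  ultimately show ?thesis using mat_inv_eqI[OF M] by metis
qed

lemma sym_posdef_mat_inv_sym_posdef:
  assumes pd: "sym_posdef M N"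
  shows "sym_posdef (mat_inv M) N"
proof -
  have M: "M \<in> carrier_mat N N" using pd unfolding sym_posdef_def by auto
  note I = sym_posdef_mat_inv[OF pd]
  have "v \<bullet> (mat_inv M *\<^sub>v v) > 0" if v: "v \<in> carrier_vec N" "v \<noteq> 0\<^sub>v N" for v
  proof -
    let ?w = "mat_inv M *\<^sub>v v"
    have w: "?w \<in> carrier_vec N" using I v by simp
    have v_eq: "v = M *\<^sub>v ?w" using sym_posdef_mat_inv_cancel[OF pd v(1)] by simp
    then have "?w \<noteq> 0\<^sub>v N" using v M by auto
    then have "?w \<bullet> (M *\<^sub>v ?w) > 0" using pd w unfolding sym_posdef_def by auto
    then show ?thesis using v_eq comm_scalar_prod[OF v(1) w] by simp
  qed
  then show ?thesis unfolding sym_posdef_def using I(1) sym_posdef_mat_inv_sym[OF pd] by auto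
qed

section \<open>Extremal eigenvalues of symmetric matrices\<close>

lemma char_matrix_mult_vec:
  fixes M :: "real mat"
  assumes M: "M \<in> carrier_mat N N" and x: "x \<in> carrier_vec N"
  shows "char_matrix M c *\<^sub>v x = M *\<^sub>v x + (- c) \<cdot>\<^sub>v x"
proof -
  have "(\<Sum>j<N. (M $$ (i, j) - c * (if j = i then 1 else 0)) * x $ j) =
        (\<Sum>j<N. M $$ (i, j) * x $ j) - c * x $ i" if "i < N" for i
  proof -
    have "(\<Sum>j<N. (M $$ (i, j) - c * (if j = i then 1 else 0)) * x $ j) =
        (\<Sum>j<N. M $$ (i, j) * x $ j) - (\<Sum>j<N. (if j = i then c * x $ j else 0))"
      by (subst sum_subtractf[symmetric], intro sum.cong) (auto simp: algebra_simps)
    then show ?thesis using that by simp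
  qed
  then show ?thesis using M x unfolding char_matrix_def
    by (intro eq_vecI) (auto simp: add_scalar_prod_distrib[of _ N] scalar_prod_sum_lessThan)
qed

lemma char_matrix_sym_psd:
  fixes M :: "real mat"
  assumes M: "M \<in> carrier_mat N N" and s: "transpose_mat M = M"
    and low: "\<And>x. x \<in> carrier_vec N \<Longrightarrow> \<mu> * (x \<bullet> x) \<le> x \<bullet> (M *\<^sub>v x)"
  shows "sym_psd (char_matrix M \<mu>) N"
proof -
  have "M $$ (j, i) = M $$ (i, j)" if "i < N" "j < N" for i j
    using arg_cong[OF s, of "\<lambda>A. A $$ (i, j)"] that M by simp
  then have "transpose_mat (char_matrix M \<mu>) = char_matrix M \<mu>"
    using M unfolding char_matrix_def by (intro eq_matI) auto
  moreover have "x \<bullet> (char_matrix M \<mu> *\<^sub>v x) = x \<bullet> (M *\<^sub>v x) - \<mu> * (x \<bullet> x)"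
    if "x \<in> carrier_vec N" for x
    using that M by (simp add: char_matrix_mult_vec scalar_prod_add_distrib[of x N])
  ultimately show ?thesis
    using M low unfolding sym_psd_def char_matrix_def by auto
qed

text \<open>Cauchy-Schwarz for the form of \<open>R\<close>, applied to \<open>x\<close> and \<open>R\<^sup>-\<^sup>1 x\<close>, bounds \<open>(x \<bullet> x)\<^sup>2\<close>
  by \<open>(x \<bullet> R x) (x \<bullet> R\<^sup>-\<^sup>1 x)\<close>.\<close>

lemma sym_psd_invertible_coercive:
  fixes R :: "real mat"
  assumes R: "sym_psd R N" and det: "det R \<noteq> 0"
  obtains K where "K > 0" "\<And>x. x \<in> carrier_vec N \<Longrightarrow> x \<bullet> x \<le> K * (x \<bullet> (R *\<^sub>v x))"
proof -
  have Rc: "R \<in> carrier_mat N N" and Rp: "\<And>x. x \<in> carrier_vec N \<Longrightarrow> x \<bullet> (R *\<^sub>v x) \<ge> 0"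
    using R unfolding sym_psd_def by auto
  from det_non_zero_imp_unit[OF Rc det, of "()"]
  obtain Ri where Ri: "Ri \<in> carrier_mat N N" "R * Ri = 1\<^sub>m N"
    unfolding Units_def ring_mat_def by auto
  define K where "K = (\<Sum>i<N. \<Sum>j<N. \<bar>Ri $$ (i, j)\<bar>) + 1"
  have "K > 0" unfolding K_def by (simp add: add_nonneg_pos sum_nonneg)
  moreover have "x \<bullet> x \<le> K * (x \<bullet> (R *\<^sub>v x))" if x: "x \<in> carrier_vec N" for x
  proof -
    let ?w = "Ri *\<^sub>v x"
    have w: "?w \<in> carrier_vec N" using Ri x by simp
    have "R *\<^sub>v ?w = x" using Ri x assoc_mult_mat_vec[OF Rc Ri(1) x] by simp
    then have cs: "(x \<bullet> x)\<^sup>2 \<le> (x \<bullet> (R *\<^sub>v x)) * (x \<bullet> ?w)"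
      using sym_psd_cauchy_schwarz[OF R x w] comm_scalar_prod[OF w x] by simp
    have "x \<bullet> ?w \<le> K * (x \<bullet> x)"
      using abs_quadratic_form_le[OF Ri(1) x] scalar_prod_self_nonneg[of x]
      unfolding K_def by (simp add: algebra_simps)
    then have "(x \<bullet> x) * (x \<bullet> x) \<le> (K * (x \<bullet> (R *\<^sub>v x))) * (x \<bullet> x)"
      using cs Rp[OF x] mult_left_mono[of "x \<bullet> ?w" "K * (x \<bullet> x)" "x \<bullet> (R *\<^sub>v x)"]
      by (simp add: power2_eq_square algebra_simps)
    then show ?thesis
      using scalar_prod_self_nonneg[of x] Rp[OF x] \<open>K > 0\<close>
      by (cases "x \<bullet> x = 0") (auto simp: mult_le_cancel_right)
  qed
  ultimately show thesis using that by blast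
qed

definition rayleigh_inf :: "real mat \<Rightarrow> nat \<Rightarrow> real" where
  "rayleigh_inf M N = Inf ((\<lambda>x. x \<bullet> (M *\<^sub>v x)) ` {x \<in> carrier_vec N. x \<bullet> x = 1})"

lemma rayleigh_inf_le:
  fixes M :: "real mat"
  assumes M: "M \<in> carrier_mat N N" and x: "x \<in> carrier_vec N"
  shows "rayleigh_inf M N * (x \<bullet> x) \<le> x \<bullet> (M *\<^sub>v x)"
proof (cases "x = 0\<^sub>v N")
  case False
  let ?Q = "(\<lambda>x. x \<bullet> (M *\<^sub>v x)) ` {x \<in> carrier_vec N. x \<bullet> x = 1}"
  have "bdd_below ?Q"
  proof
    fix q assume "q \<in> ?Q"
    then obtain z where "z \<in> carrier_vec N" "z \<bullet> z = 1" "q = z \<bullet> (M *\<^sub>v z)" by auto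
    then show "- (\<Sum>i<N. \<Sum>j<N. \<bar>M $$ (i, j)\<bar>) \<le> q" using abs_quadratic_form_le[OF M] by force
  qed
  have xx: "x \<bullet> x > 0" using scalar_prod_self_pos[OF x False] .
  define r where "r = 1 / sqrt (x \<bullet> x)"
  have r2: "r * r = 1 / (x \<bullet> x)" unfolding r_def using xx by (simp add: real_sqrt_mult[symmetric])
  let ?y = "r \<cdot>\<^sub>v x"
  have "?y \<bullet> ?y = 1" using x xx r2 by (simp add: mult.assoc[symmetric])
  then have "?y \<bullet> (M *\<^sub>v ?y) \<in> ?Q" using x by (intro imageI) simp
  moreover have "?y \<bullet> (M *\<^sub>v ?y) = (x \<bullet> (M *\<^sub>v x)) / (x \<bullet> x)"
    using x M r2 by (simp add: mult_mat_vec mult.assoc[symmetric])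
  ultimately have "rayleigh_inf M N \<le> (x \<bullet> (M *\<^sub>v x)) / (x \<bullet> x)"
    unfolding rayleigh_inf_def using cInf_lower[OF _ \<open>bdd_below ?Q\<close>] by simp
  then show ?thesis using xx by (simp add: field_simps)
qed (use M in simp)

text \<open>Otherwise \<open>M - \<mu> I\<close>, \<open>\<mu>\<close> the infimum of the Rayleigh quotient, would be coercive and the
  infimum could be raised.\<close>

lemma rayleigh_inf_eigenvalue:
  fixes M :: "real mat"
  assumes M: "M \<in> carrier_mat N N" and s: "transpose_mat M = M" and N: "0 < N"
  shows "eigenvalue M (rayleigh_inf M N)"
proof -
  let ?\<mu> = "rayleigh_inf M N"
  have R: "sym_psd (char_matrix M ?\<mu>) N" by (rule char_matrix_sym_psd[OF M s rayleigh_inf_le[OF M]])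
  have "det (char_matrix M ?\<mu>) = 0"
  proof (rule ccontr)
    assume "det (char_matrix M ?\<mu>) \<noteq> 0"
    then obtain K where K: "K > 0"
      and coercive: "\<And>x. x \<in> carrier_vec N \<Longrightarrow> x \<bullet> x \<le> K * (x \<bullet> (char_matrix M ?\<mu> *\<^sub>v x))"
      using sym_psd_invertible_coercive[OF R] by blast
    have "?\<mu> + 1 / K \<le> q" if q: "q \<in> (\<lambda>x. x \<bullet> (M *\<^sub>v x)) ` {x \<in> carrier_vec N. x \<bullet> x = 1}" for q
    proof -
      obtain x where x: "x \<in> carrier_vec N" "x \<bullet> x = 1" "q = x \<bullet> (M *\<^sub>v x)" using q by auto
      have "1 \<le> K * (q - ?\<mu>)"
        using coercive[OF x(1)] x M by (simp add: char_matrix_mult_vec scalar_prod_add_distrib[of x N])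
      then show ?thesis using K by (simp add: field_simps)
    qed
    moreover have "unit_vec N 0 \<in> {x \<in> carrier_vec N. x \<bullet> x = (1::real)}" using N by simp
    ultimately have "?\<mu> + 1 / K \<le> ?\<mu>"
      unfolding rayleigh_inf_def[of M N] by (intro cInf_greatest) blast+
    then show False using K by simp
  qed
  then show ?thesis using eigenvalue_det[OF M] by simp
qed

lemma finite_eigenvalues:
  fixes M :: "real mat"
  assumes "M \<in> carrier_mat N N"
  shows "finite {k. eigenvalue M k}"
proof -
  have "char_poly M \<noteq> 0" using degree_monic_char_poly[OF assms] by auto
  then show ?thesis using eigenvalue_root_char_poly[OF assms] poly_roots_finite by simp
qed

lemma eigenvalue_uminus:
  fixes M :: "real mat"
  assumes M: "M \<in> carrier_mat N N" and e: "eigenvalue (- M) k"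
  shows "eigenvalue M (- k)"
proof -
  obtain v where v: "v \<in> carrier_vec N" "v \<noteq> 0\<^sub>v N" "(- M) *\<^sub>v v = k \<cdot>\<^sub>v v"
    using e M unfolding eigenvalue_def eigenvector_def by auto
  have h: "- (M *\<^sub>v v) = k \<cdot>\<^sub>v v" using M v by simp
  have "M *\<^sub>v v = (- k) \<cdot>\<^sub>v v"
  proof (rule eq_vecI)
    fix i assume "i < dim_vec ((- k) \<cdot>\<^sub>v v)"
    then show "(M *\<^sub>v v) $ i = ((- k) \<cdot>\<^sub>v v) $ i"
      using arg_cong[OF h, of "\<lambda>w. w $ i"] M v by simp
  qed (use M v in simp)
  then show ?thesis using v M unfolding eigenvalue_def eigenvector_def by auto
qed

lemma sym_posdef_eigenvalue_pos:
  assumes pd: "sym_posdef M N" and e: "eigenvalue M k"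
  shows "k > 0"
proof -
  have M: "M \<in> carrier_mat N N" using pd unfolding sym_posdef_def by auto
  obtain v where v: "v \<in> carrier_vec N" "v \<noteq> 0\<^sub>v N" "M *\<^sub>v v = k \<cdot>\<^sub>v v"
    using e M unfolding eigenvalue_def eigenvector_def by auto
  have "k * (v \<bullet> v) > 0" using pd v unfolding sym_posdef_def by auto
  then show ?thesis using scalar_prod_self_pos[OF v(1,2)] by (simp add: zero_less_mult_iff)
qed

lemma lambda_min_le_quadratic_form:
  fixes M :: "real mat"
  assumes M: "M \<in> carrier_mat N N" "transpose_mat M = M" and N: "0 < N"
    and x: "x \<in> carrier_vec N"
  shows "lambda_min M * (x \<bullet> x) \<le> x \<bullet> (M *\<^sub>v x)"
proof -
  have "lambda_min M \<le> rayleigh_inf M N"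
    unfolding lambda_min_def using finite_eigenvalues[OF M(1)] rayleigh_inf_eigenvalue[OF M N]
    by (intro Min_le) auto
  then have "lambda_min M * (x \<bullet> x) \<le> rayleigh_inf M N * (x \<bullet> x)"
    using scalar_prod_self_nonneg by (rule mult_right_mono)
  then show ?thesis using rayleigh_inf_le[OF M(1) x] by linarith
qed

lemma lambda_max_ge_quadratic_form:
  fixes M :: "real mat"
  assumes M: "M \<in> carrier_mat N N" "transpose_mat M = M" and N: "0 < N"
    and x: "x \<in> carrier_vec N"
  shows "x \<bullet> (M *\<^sub>v x) \<le> lambda_max M * (x \<bullet> x)"
proof -
  have nM: "- M \<in> carrier_mat N N" "transpose_mat (- M) = - M" using M by (auto simp: transpose_uminus)
  have "- rayleigh_inf (- M) N \<le> lambda_max M"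
    unfolding lambda_max_def
    using finite_eigenvalues[OF M(1)] eigenvalue_uminus[OF M(1) rayleigh_inf_eigenvalue[OF nM N]]
    by (intro Max_ge) auto
  then have "(- rayleigh_inf (- M) N) * (x \<bullet> x) \<le> lambda_max M * (x \<bullet> x)"
    using scalar_prod_self_nonneg by (rule mult_right_mono)
  moreover have "x \<bullet> ((- M) *\<^sub>v x) = - (x \<bullet> (M *\<^sub>v x))"
    using x M by (simp add: scalar_prod_uminus_right)
  ultimately show ?thesis using rayleigh_inf_le[OF nM(1) x] by simp
qed

lemma lambda_min_pos:
  assumes pd: "sym_posdef M N" and N: "0 < N"
  shows "lambda_min M > 0"
proof -
  have M: "M \<in> carrier_mat N N" "transpose_mat M = M" using pd unfolding sym_posdef_def by auto
  have "eigenvalue M (lambda_min M)"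
    unfolding lambda_min_def using Min_in[OF finite_eigenvalues[OF M(1)]] rayleigh_inf_eigenvalue[OF M N]
    by auto
  then show ?thesis by (rule sym_posdef_eigenvalue_pos[OF pd])
qed

section \<open>Block-diagonal matrices\<close>

lemma sum_lessThan_mult_blocks:
  fixes g :: "nat \<Rightarrow> 'a::comm_monoid_add"
  shows "(\<Sum>r<n * l. g r) = (\<Sum>b<l. \<Sum>i<n. g (b * n + i))"
proof -
  have "bij_betw (\<lambda>(b, i). b * n + i) ({..<l} \<times> {..<n}) {..<n * l}"
  proof (rule bij_betwI[where g = "\<lambda>r. (r div n, r mod n)"])
    show "(\<lambda>(b, i). b * n + i) \<in> {..<l} \<times> {..<n} \<rightarrow> {..<n * l}"
    proof (clarsimp)
      fix b i assume "b < l" "i < n"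
      then have "b * n + i < (b + 1) * n" by simp
      also have "\<dots> \<le> l * n" using \<open>b < l\<close> by (intro mult_right_mono) auto
      finally show "b * n + i < n * l" by (simp add: mult.commute)
    qed
    show "(\<lambda>r. (r div n, r mod n)) \<in> {..<n * l} \<rightarrow> {..<l} \<times> {..<n}"
    proof (clarsimp)
      fix r assume "r < n * l"
      moreover from this have "n > 0" by (cases "n = 0") auto
      ultimately show "r div n < l \<and> r mod n < n" by (simp add: less_mult_imp_div_less mult.commute)
    qed
  qed auto
  then show ?thesis
    by (simp add: sum.reindex_bij_betw[symmetric] sum.cartesian_product case_prod_beta)
qed

definition block_diag_mat :: "nat \<Rightarrow> nat \<Rightarrow> (nat \<Rightarrow> real mat) \<Rightarrow> real mat" where
  "block_diag_mat n l Y = mat (n * l) (n * l)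
     (\<lambda>(r, c). if r div n = c div n then Y (r div n) $$ (r mod n, c mod n) else 0)"

definition vec_block :: "nat \<Rightarrow> real vec \<Rightarrow> nat \<Rightarrow> real vec" where
  "vec_block n x b = vec n (\<lambda>i. x $ (b * n + i))"

lemma quadratic_form_block_diag_mat:
  assumes Y: "\<And>b. Y b \<in> carrier_mat n n" and x: "x \<in> carrier_vec (n * l)"
  shows "x \<bullet> (block_diag_mat n l Y *\<^sub>v x) = (\<Sum>b<l. vec_block n x b \<bullet> (Y b *\<^sub>v vec_block n x b))"
proof -
  have "x \<bullet> (block_diag_mat n l Y *\<^sub>v x) = (\<Sum>r<n * l. \<Sum>c<n * l.
      x $ r * (if r div n = c div n then Y (r div n) $$ (r mod n, c mod n) else 0) * x $ c)"
    using x by (simp add: quadratic_form_double_sum[of _ "n * l"] block_diag_mat_def)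
  also have "\<dots> = (\<Sum>b<l. \<Sum>i<n. \<Sum>b'<l. \<Sum>j<n.
      x $ (b * n + i) * (if b = b' then Y b $$ (i, j) else 0) * x $ (b' * n + j))"
    unfolding sum_lessThan_mult_blocks[of _ n l] by (intro sum.cong refl) auto
  also have "\<dots> = (\<Sum>b<l. \<Sum>i<n. \<Sum>j<n. x $ (b * n + i) * Y b $$ (i, j) * x $ (b * n + j))"
  proof (rule sum.cong[OF refl], rule sum.cong[OF refl])
    fix b i assume "b \<in> {..<l}"
    then show "(\<Sum>b'<l. \<Sum>j<n. x $ (b * n + i) * (if b = b' then Y b $$ (i, j) else 0) * x $ (b' * n + j))
        = (\<Sum>j<n. x $ (b * n + i) * Y b $$ (i, j) * x $ (b * n + j))"
      by (simp add: if_distrib if_distribR sum.If_cases)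
  qed
  also have "\<dots> = (\<Sum>b<l. vec_block n x b \<bullet> (Y b *\<^sub>v vec_block n x b))"
    by (intro sum.cong refl) (simp add: Y quadratic_form_double_sum[of _ n] vec_block_def)
  finally show ?thesis .
qed

lemma block_diag_mat_sym:
  assumes Y: "\<And>b. b < l \<Longrightarrow> Y b \<in> carrier_mat n n" "\<And>b. b < l \<Longrightarrow> transpose_mat (Y b) = Y b"
  shows "transpose_mat (block_diag_mat n l Y) = block_diag_mat n l Y"
proof (rule eq_matI)
  fix r c assume "r < dim_row (block_diag_mat n l Y)" "c < dim_col (block_diag_mat n l Y)"
  then have rc: "r < n * l" "c < n * l" by (simp_all add: block_diag_mat_def)
  then have "n > 0" by (cases "n = 0") auto
  with rc have "r div n < l" "c div n < l" "r mod n < n" "c mod n < n"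
    by (auto simp: less_mult_imp_div_less mult.commute)
  moreover have "Y b $$ (i, j) = Y b $$ (j, i)" if "b < l" "i < n" "j < n" for b i j
    using Y[OF that(1)] that(2,3) by (metis carrier_matD index_transpose_mat(1))
  ultimately show "transpose_mat (block_diag_mat n l Y) $$ (r, c) = block_diag_mat n l Y $$ (r, c)"
    using rc by (auto simp: block_diag_mat_def)
qed (auto simp: block_diag_mat_def)

lemma block_diag_mat_sym_posdef:
  assumes Y: "\<And>b. b < l \<Longrightarrow> sym_posdef (Y b) n"
  shows "sym_posdef (block_diag_mat n l Y) (n * l)"
proof -
  let ?Y = "\<lambda>b. if b < l then Y b else 0\<^sub>m n n"
  have Yc: "?Y b \<in> carrier_mat n n" for b using Y unfolding sym_posdef_def by auto
  have block_eq: "block_diag_mat n l Y = block_diag_mat n l ?Y"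
    unfolding block_diag_mat_def
    by (intro eq_matI) (auto simp: less_mult_imp_div_less mult.commute)
  have "transpose_mat (block_diag_mat n l Y) = block_diag_mat n l Y"
    using Y unfolding sym_posdef_def by (intro block_diag_mat_sym) auto
  moreover have "x \<bullet> (block_diag_mat n l Y *\<^sub>v x) > 0"
    if x: "x \<in> carrier_vec (n * l)" "x \<noteq> 0\<^sub>v (n * l)" for x
  proof -
    obtain r where r: "r < n * l" "x $ r \<noteq> 0"
      using x by (metis carrier_vecD eq_vecI index_zero_vec(1) index_zero_vec(2))
    then have n: "n > 0" by (cases "n = 0") auto
    with r have b: "r div n < l" by (simp add: less_mult_imp_div_less mult.commute)
    have "vec_block n x (r div n) $ (r mod n) \<noteq> 0"
      using r n unfolding vec_block_def by (simp add: mult.commute)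
    then have "vec_block n x (r div n) \<noteq> 0\<^sub>v n" using n by auto
    then have pos: "vec_block n x (r div n) \<bullet> (?Y (r div n) *\<^sub>v vec_block n x (r div n)) > 0"
      using Y[OF b] b unfolding sym_posdef_def by (auto simp: vec_block_def)
    have "vec_block n x b \<bullet> (?Y b *\<^sub>v vec_block n x b) \<ge> 0" if "b < l" for b
      using sym_posdef_imp_sym_psd[OF Y[OF that]] that unfolding sym_psd_def
      by (auto simp: vec_block_def)
    then have "vec_block n x (r div n) \<bullet> (?Y (r div n) *\<^sub>v vec_block n x (r div n))
        \<le> (\<Sum>b<l. vec_block n x b \<bullet> (?Y b *\<^sub>v vec_block n x b))"
      using b by (intro member_le_sum) auto
    with pos show ?thesis
      unfolding block_eq quadratic_form_block_diag_mat[OF Yc x(1)] by linarith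
  qed
  ultimately show ?thesis unfolding sym_posdef_def by (simp add: block_diag_mat_def)
qed

lemma Lmat_sym_posdef:
  assumes "sym_posdef X0 n" and "sym_posdef W n"
  shows "sym_posdef (Lmat n l X0 W) (n * l)"
proof -
  have "Zmat n l X0 W = block_diag_mat n l (\<lambda>b. if b = 0 then X0 else W)"
    unfolding Zmat_def block_diag_mat_def by (intro eq_matI) auto
  then show ?thesis
    unfolding Lmat_def using assms
    by (simp add: block_diag_mat_sym_posdef sym_posdef_mat_inv_sym_posdef)
qed

section \<open>Sums of outer products\<close>

definition outer_sum :: "nat \<Rightarrow> ('k \<Rightarrow> real vec) \<Rightarrow> 'k set \<Rightarrow> real mat" where
  "outer_sum N g K = mat N N (\<lambda>(r, c). \<Sum>k\<in>K. g k $ r * g k $ c)"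

lemma outer_sum_carrier [simp]: "outer_sum N g K \<in> carrier_mat N N"
  unfolding outer_sum_def by simp

lemma outer_sum_empty: "outer_sum N g {} = 0\<^sub>m N N"
  unfolding outer_sum_def by (intro eq_matI) auto

lemma outer_sum_union:
  assumes "finite K1" "finite K2" "K1 \<inter> K2 = {}"
  shows "outer_sum N g (K1 \<union> K2) = outer_sum N g K1 + outer_sum N g K2"
  unfolding outer_sum_def using assms by (intro eq_matI) (auto simp: sum.union_disjoint)

lemma quadratic_form_outer_sum:
  assumes x: "x \<in> carrier_vec N"
  shows "x \<bullet> (outer_sum N g K *\<^sub>v x) = (\<Sum>k\<in>K. (g k \<bullet> x)\<^sup>2)"
proof -
  have "x \<bullet> (outer_sum N g K *\<^sub>v x) = (\<Sum>r<N. \<Sum>c<N. x $ r * outer_sum N g K $$ (r, c) * x $ c)"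
    using x by (simp add: quadratic_form_double_sum[of _ N])
  also have "\<dots> = (\<Sum>r<N. \<Sum>c<N. \<Sum>k\<in>K. (g k $ r * x $ r) * (g k $ c * x $ c))"
    by (intro sum.cong refl) (simp add: outer_sum_def sum_distrib_left sum_distrib_right mult_ac)
  also have "\<dots> = (\<Sum>r<N. \<Sum>k\<in>K. \<Sum>c<N. (g k $ r * x $ r) * (g k $ c * x $ c))"
    by (rule sum.cong[OF refl], rule sum.swap)
  also have "\<dots> = (\<Sum>k\<in>K. (\<Sum>r<N. g k $ r * x $ r) * (\<Sum>c<N. g k $ c * x $ c))"
    by (subst sum.swap) (simp only: sum_product)
  also have "\<dots> = (\<Sum>k\<in>K. (g k \<bullet> x)\<^sup>2)"
    using x by (simp add: scalar_prod_sum_lessThan[of x N] power2_eq_square)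
  finally show ?thesis .
qed

lemma outer_sum_sym_psd: "sym_psd (outer_sum N g K) N"
proof -
  have "transpose_mat (outer_sum N g K) = outer_sum N g K"
    unfolding outer_sum_def by (intro eq_matI) (auto simp: mult.commute)
  then show ?thesis unfolding sym_psd_def by (simp add: quadratic_form_outer_sum sum_nonneg)
qed

lemma sum_sandwich_outer_sum:
  fixes M :: "real mat"
  assumes M: "M \<in> carrier_mat N N" "transpose_mat M = M" and g: "\<And>k. k \<in> K \<Longrightarrow> g k \<in> carrier_vec N"
  shows "(\<Sum>j<N. (M *\<^sub>v unit_vec N j) \<bullet> (outer_sum N g K *\<^sub>v (M *\<^sub>v unit_vec N j)))
       = (\<Sum>k\<in>K. (M *\<^sub>v g k) \<bullet> (M *\<^sub>v g k))"
proof -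
  have entry: "g k \<bullet> (M *\<^sub>v unit_vec N j) = (M *\<^sub>v g k) $ j" if "k \<in> K" "j < N" for k j
    using sym_mat_scalar_prod_swap[OF M g[OF that(1)] unit_vec_carrier[of N j]] M g that by simp
  have "(\<Sum>j<N. (M *\<^sub>v unit_vec N j) \<bullet> (outer_sum N g K *\<^sub>v (M *\<^sub>v unit_vec N j)))
      = (\<Sum>j<N. \<Sum>k\<in>K. (g k \<bullet> (M *\<^sub>v unit_vec N j))\<^sup>2)"
    using M by (intro sum.cong refl) (simp add: quadratic_form_outer_sum)
  also have "\<dots> = (\<Sum>k\<in>K. \<Sum>j<N. (g k \<bullet> (M *\<^sub>v unit_vec N j))\<^sup>2)"
    by (rule sum.swap)
  also have "\<dots> = (\<Sum>k\<in>K. \<Sum>j<N. (M *\<^sub>v g k) $ j * (M *\<^sub>v g k) $ j)"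
    by (intro sum.cong refl) (simp add: entry power2_eq_square)
  also have "\<dots> = (\<Sum>k\<in>K. (M *\<^sub>v g k) \<bullet> (M *\<^sub>v g k))"
    using M by (intro sum.cong refl) (simp add: g scalar_prod_sum_lessThan[of _ N])
  finally show ?thesis .
qed

section \<open>The information matrix of the selected outputs\<close>

text \<open>Row of \<open>(I\<^sub>\<ell> \<otimes> C) \<Phi>\<close> belonging to output \<open>i\<close> at time \<open>t\<close>, scaled by \<open>1 / \<sigma> i\<close>.\<close>

definition obs_row :: "nat \<Rightarrow> nat \<Rightarrow> real mat \<Rightarrow> real mat \<Rightarrow> (nat \<Rightarrow> real) \<Rightarrow> nat \<times> nat \<Rightarrow> real vec" where
  "obs_row n l A C \<sigma> = (\<lambda>(i, t).
     vec (n * l) (\<lambda>c. (\<Sum>a<n. C $$ (i, a) * Phi n l A $$ (t * n + a, c)) / \<sigma> i))"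

lemma obs_row_carrier [simp]: "obs_row n l A C \<sigma> k \<in> carrier_vec (n * l)"
  unfolding obs_row_def by (simp add: case_prod_beta)

lemma sorted_list_of_set_nth_mem:
  "finite S \<Longrightarrow> q < card S \<Longrightarrow> sorted_list_of_set S ! q \<in> S"
  by (metis length_sorted_list_of_set nth_mem set_sorted_list_of_set)

lemma sel_mat_mult_index:
  assumes S: "finite S" "S \<subseteq> {..<p}" and q: "q < card S"
    and M: "M \<in> carrier_mat p m" and a: "a < m"
  shows "(sel_mat p S * M) $$ (q, a) = M $$ (sorted_list_of_set S ! q, a)"
proof -
  let ?\<theta> = "sorted_list_of_set S ! q"
  have "(sel_mat p S * M) $$ (q, a) = (\<Sum>j<p. (if j = ?\<theta> then 1 else 0) * M $$ (j, a))"
    using M q a by (simp add: sel_mat_def scalar_prod_sum_lessThan[of _ p])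
  also have "\<dots> = (\<Sum>j<p. if j = ?\<theta> then M $$ (j, a) else 0)"
    by (intro sum.cong) auto
  also have "\<dots> = M $$ (?\<theta>, a)"
    using sorted_list_of_set_nth_mem[OF S(1) q] S(2) by auto
  finally show ?thesis .
qed

lemma sel_Vmat_sel:
  assumes S: "finite S" "S \<subseteq> {..<p}"
  shows "sel_mat p S * Vmat p \<sigma> * transpose_mat (sel_mat p S)
       = mat_diag (card S) (\<lambda>q. (\<sigma> (sorted_list_of_set S ! q))\<^sup>2)"
proof (rule eq_matI)
  let ?\<theta> = "\<lambda>q. sorted_list_of_set S ! q"
  define X where "X = sel_mat p S * Vmat p \<sigma>"
  have X: "X \<in> carrier_mat (card S) p"
    unfolding X_def by (rule mult_carrier_mat[of _ _ p]) (simp_all add: sel_mat_def Vmat_def)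
  fix q q' assume "q < dim_row (mat_diag (card S) (\<lambda>q. (\<sigma> (?\<theta> q))\<^sup>2))"
    "q' < dim_col (mat_diag (card S) (\<lambda>q. (\<sigma> (?\<theta> q))\<^sup>2))"
  then have q: "q < card S" and q': "q' < card S" by (auto simp: mat_diag_def)
  have \<theta>: "?\<theta> q < p" using sorted_list_of_set_nth_mem[OF S(1) q] S(2) by auto
  have Xq: "X $$ (q, j) = (if j = ?\<theta> q then (\<sigma> (?\<theta> q))\<^sup>2 else 0)" if "j < p" for j
    using sel_mat_mult_index[OF S q _ that, of "Vmat p \<sigma>"] \<theta> that unfolding X_def
    by (simp add: Vmat_def)
  have inj: "?\<theta> q = ?\<theta> q' \<longleftrightarrow> q = q'"
    using q q' by (simp add: nth_eq_iff_index_eq)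
  have "(X * transpose_mat (sel_mat p S)) $$ (q, q')
      = (\<Sum>j<p. (if j = ?\<theta> q then (\<sigma> (?\<theta> q))\<^sup>2 else 0) * (if j = ?\<theta> q' then 1 else 0))"
    using X q q' by (simp add: scalar_prod_sum_lessThan[of _ p] sel_mat_def Xq)
  also have "\<dots> = (\<Sum>j<p. if j = ?\<theta> q then (if q = q' then (\<sigma> (?\<theta> q))\<^sup>2 else 0) else 0)"
    using inj by (intro sum.cong) auto
  also have "\<dots> = mat_diag (card S) (\<lambda>q. (\<sigma> (?\<theta> q))\<^sup>2) $$ (q, q')"
    using \<theta> q q' by (simp add: mat_diag_def)
  finally show "(sel_mat p S * Vmat p \<sigma> * transpose_mat (sel_mat p S)) $$ (q, q')
      = mat_diag (card S) (\<lambda>q. (\<sigma> (?\<theta> q))\<^sup>2) $$ (q, q')"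
    unfolding X_def .
qed (auto simp: sel_mat_def Vmat_def mat_diag_def)

lemma blockdiag_mat_diag:
  assumes s: "s > 0"
  shows "blockdiag l (mat_diag s d) = mat_diag (l * s) (\<lambda>r. d (r mod s))"
proof (rule eq_matI)
  fix r c assume "r < dim_row (mat_diag (l * s) (\<lambda>r. d (r mod s)))"
    "c < dim_col (mat_diag (l * s) (\<lambda>r. d (r mod s)))"
  then have rc: "r < l * s" "c < l * s" by (simp_all add: mat_diag_def)
  show "blockdiag l (mat_diag s d) $$ (r, c) = mat_diag (l * s) (\<lambda>r. d (r mod s)) $$ (r, c)"
  proof (cases "r = c")
    case False
    then have "r div s \<noteq> c div s \<or> r mod s \<noteq> c mod s" by (metis div_mult_mod_eq)
    then show ?thesis using rc s by (auto simp: blockdiag_def mat_diag_def)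
  qed (use rc s in \<open>simp add: blockdiag_def mat_diag_def\<close>)
qed (simp_all add: blockdiag_def mat_diag_def)

lemma mat_inv_mat_diag:
  assumes "\<And>i. i < k \<Longrightarrow> d i \<noteq> 0"
  shows "mat_inv (mat_diag k d) = mat_diag k (\<lambda>i. 1 / d i)"
proof -
  have "mat_diag k (\<lambda>i. d i * (1 / d i)) = 1\<^sub>m k" "mat_diag k (\<lambda>i. 1 / d i * d i) = 1\<^sub>m k"
    using assms by (auto simp: mat_diag_def intro!: eq_matI)
  then show ?thesis by (intro mat_inv_eqI) simp_all
qed

lemma transpose_mult_mat_diag_mult_index:
  fixes G :: "real mat"
  assumes G: "G \<in> carrier_mat m N" and "r < N" "c < N"
  shows "(transpose_mat G * mat_diag m w * G) $$ (r, c) = (\<Sum>k<m. w k * G $$ (k, r) * G $$ (k, c))"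
  using assms
  by (simp add: mat_diag_mult_right[of "transpose_mat G" N m] scalar_prod_sum_lessThan[of _ m] mult_ac)

lemma sum_sorted_list_of_set_blocks:
  assumes "finite S"
  shows "(\<Sum>k<l * card S. F (sorted_list_of_set S ! (k mod card S), k div card S))
       = (\<Sum>x\<in>S \<times> {..<l}. F x)"
proof -
  have "(\<Sum>k<l * card S. F (sorted_list_of_set S ! (k mod card S), k div card S))
      = (\<Sum>t<l. \<Sum>q<card S. F (sorted_list_of_set S ! q, t))"
    by (subst mult.commute, subst sum_lessThan_mult_blocks) (intro sum.cong refl; simp)
  also have "\<dots> = (\<Sum>q<card S. \<Sum>t<l. F (sorted_list_of_set S ! q, t))"
    by (rule sum.swap)
  also have "\<dots> = (\<Sum>i\<in>S. \<Sum>t<l. F (i, t))"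
    using sum.reindex_bij_betw[OF bij_betw_nth[of "sorted_list_of_set S" "{..<card S}" S]] assms
    by simp
  finally show ?thesis by (simp add: sum.cartesian_product)
qed

lemma obs_matrix_index:
  fixes C :: "real mat"
  assumes C: "C \<in> carrier_mat p n" and S: "finite S" "S \<subseteq> {..<p}"
    and k: "k < l * card S" and \<sigma>: "\<sigma> (sorted_list_of_set S ! (k mod card S)) \<noteq> 0"
    and c: "c < n * l"
  shows "(blockdiag l (sel_mat p S * C) * Phi n l A) $$ (k, c)
       = \<sigma> (sorted_list_of_set S ! (k mod card S))
         * obs_row n l A C \<sigma> (sorted_list_of_set S ! (k mod card S), k div card S) $ c"
proof -
  define s where "s = card S"
  define i where "i = sorted_list_of_set S ! (k mod s)"
  define t where "t = k div s"
  define SC where "SC = sel_mat p S * C"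
  have s: "s > 0" using k unfolding s_def by (cases "card S = 0") auto
  have km: "k mod s < s" and t: "t < l"
    using k s unfolding s_def t_def by (auto simp: less_mult_imp_div_less)
  have SC: "SC \<in> carrier_mat s n"
    unfolding SC_def s_def by (rule mult_carrier_mat[OF _ C]) (simp add: sel_mat_def)
  have SC_index: "SC $$ (k mod s, a) = C $$ (i, a)" if "a < n" for a
    unfolding SC_def i_def using sel_mat_mult_index[OF S km[unfolded s_def] C that] by (simp add: s_def)
  have block: "blockdiag l SC $$ (k, b * n + a) * Phi n l A $$ (b * n + a, c)
      = (if b = t then C $$ (i, a) * Phi n l A $$ (t * n + a, c) else 0)" if "b < l" "a < n" for b a
  proof -
    have "b * n + a < (b + 1) * n" using that by simp
    also have "\<dots> \<le> l * n" using that by (intro mult_right_mono) auto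
    finally have "b * n + a < l * n" .
    then show ?thesis
      using that k SC SC_index unfolding blockdiag_def t_def s_def by simp
  qed
  have BD: "blockdiag l SC \<in> carrier_mat (l * s) (n * l)"
    using SC by (simp add: blockdiag_def mult.commute)
  have P: "Phi n l A \<in> carrier_mat (n * l) (n * l)" by (simp add: Phi_def)
  have "(blockdiag l SC * Phi n l A) $$ (k, c) = (\<Sum>m<n * l. blockdiag l SC $$ (k, m) * Phi n l A $$ (m, c))"
    using BD P k c unfolding s_def by (simp add: scalar_prod_sum_lessThan[of _ "n * l"])
  also have "\<dots> = (\<Sum>b<l. if b = t then \<Sum>a<n. C $$ (i, a) * Phi n l A $$ (t * n + a, c) else 0)"
    unfolding sum_lessThan_mult_blocks by (intro sum.cong refl) (simp add: block)
  also have "\<dots> = \<sigma> i * obs_row n l A C \<sigma> (i, t) $ c"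
    using t c \<sigma> unfolding i_def s_def by (simp add: obs_row_def)
  finally show ?thesis unfolding SC_def i_def t_def s_def .
qed

lemma mat_inv_blockdiag_sel_Vmat:
  assumes S: "finite S" "S \<subseteq> {..<p}" "card S > 0" and \<sigma>: "\<forall>i<p. \<sigma> i > 0"
  shows "mat_inv (blockdiag l (sel_mat p S * Vmat p \<sigma> * transpose_mat (sel_mat p S)))
       = mat_diag (l * card S) (\<lambda>k. 1 / (\<sigma> (sorted_list_of_set S ! (k mod card S)))\<^sup>2)"
proof -
  have "\<sigma> (sorted_list_of_set S ! (k mod card S)) \<noteq> 0" for k
    using sorted_list_of_set_nth_mem[OF S(1), of "k mod card S"] S \<sigma> by fastforce
  then show ?thesis
    using sel_Vmat_sel[OF S(1,2)] blockdiag_mat_diag[OF S(3)] by (simp add: mat_inv_mat_diag)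
qed

lemma Umat_eq_outer_sum:
  fixes C :: "real mat"
  assumes C: "C \<in> carrier_mat p n" and \<sigma>: "\<forall>i<p. \<sigma> i > 0" and S: "S \<subseteq> {..<p}"
  shows "Umat n p l A C \<sigma> S = outer_sum (n * l) (obs_row n l A C \<sigma>) (S \<times> {..<l})"
proof (cases "S = {}")
  case True
  then show ?thesis by (simp add: Umat_def outer_sum_empty)
next
  case False
  have fin: "finite S" using S finite_subset by blast
  define s where "s = card S"
  have s: "s > 0" using fin False unfolding s_def by (simp add: card_gt_0_iff)
  let ?\<theta> = "\<lambda>q. sorted_list_of_set S ! q"
  have \<sigma>\<theta>: "\<sigma> (?\<theta> (k mod s)) > 0" for k
    using sorted_list_of_set_nth_mem[OF fin, of "k mod s"] S \<sigma> s unfolding s_def by auto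
  define G where "G = blockdiag l (sel_mat p S * C) * Phi n l A"
  have "blockdiag l (sel_mat p S * C) \<in> carrier_mat (l * s) (n * l)"
    using C by (simp add: blockdiag_def sel_mat_def s_def mult.commute)
  then have G: "G \<in> carrier_mat (l * s) (n * l)"
    unfolding G_def by (rule mult_carrier_mat) (simp add: Phi_def)
  have "Umat n p l A C \<sigma> S = transpose_mat G * mat_diag (l * s) (\<lambda>k. 1 / (\<sigma> (?\<theta> (k mod s)))\<^sup>2) * G"
    using False mat_inv_blockdiag_sel_Vmat[OF fin S _ \<sigma>, of l] s
    unfolding Umat_def Let_def G_def s_def by simp
  also have "\<dots> = outer_sum (n * l) (obs_row n l A C \<sigma>) (S \<times> {..<l})"
  proof (rule eq_matI)
    fix r c assume "r < dim_row (outer_sum (n * l) (obs_row n l A C \<sigma>) (S \<times> {..<l}))"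
      "c < dim_col (outer_sum (n * l) (obs_row n l A C \<sigma>) (S \<times> {..<l}))"
    then have r: "r < n * l" and c: "c < n * l" by (simp_all add: outer_sum_def)
    have "(transpose_mat G * mat_diag (l * s) (\<lambda>k. 1 / (\<sigma> (?\<theta> (k mod s)))\<^sup>2) * G) $$ (r, c)
        = (\<Sum>k<l * s. obs_row n l A C \<sigma> (?\<theta> (k mod s), k div s) $ r
                      * obs_row n l A C \<sigma> (?\<theta> (k mod s), k div s) $ c)"
      unfolding transpose_mult_mat_diag_mult_index[OF G r c]
    proof (intro sum.cong refl)
      fix k assume "k \<in> {..<l * s}"
      then have k: "k < l * card S" unfolding s_def by simp
      have "\<sigma> (?\<theta> (k mod card S)) \<noteq> 0" using \<sigma>\<theta>[of k] unfolding s_def by simp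
      note G_index = obs_matrix_index[where \<sigma> = \<sigma> and A = A, OF C fin S k this]
      show "1 / (\<sigma> (?\<theta> (k mod s)))\<^sup>2 * G $$ (k, r) * G $$ (k, c)
          = obs_row n l A C \<sigma> (?\<theta> (k mod s), k div s) $ r * obs_row n l A C \<sigma> (?\<theta> (k mod s), k div s) $ c"
        using G_index[OF r] G_index[OF c] \<sigma>\<theta>[of k] unfolding G_def s_def
        by (simp add: power2_eq_square field_simps)
    qed
    also have "\<dots> = outer_sum (n * l) (obs_row n l A C \<sigma>) (S \<times> {..<l}) $$ (r, c)"
      using r c sum_sorted_list_of_set_blocks[OF fin, where l = l and F = "\<lambda>x. obs_row n l A C \<sigma> x $ r * obs_row n l A C \<sigma> x $ c"]
      unfolding s_def by (simp add: outer_sum_def)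
    finally show "(transpose_mat G * mat_diag (l * s) (\<lambda>k. 1 / (\<sigma> (?\<theta> (k mod s)))\<^sup>2) * G) $$ (r, c)
        = outer_sum (n * l) (obs_row n l A C \<sigma>) (S \<times> {..<l}) $$ (r, c)" .
  qed (use G in \<open>simp_all add: outer_sum_def\<close>)
  finally show ?thesis .
qed

section \<open>Positive semidefinite updates\<close>

lemma mat_trace_unit_vec:
  fixes M :: "real mat"
  assumes "M \<in> carrier_mat N N"
  shows "mat_trace M = (\<Sum>j<N. unit_vec N j \<bullet> (M *\<^sub>v unit_vec N j))"
  using assms unfolding mat_trace_def by (intro sum.cong) (auto simp: scalar_prod_left_unit)

lemma mat_inv_norm_lower:
  fixes B :: "real mat"
  assumes B: "sym_posdef B N" and g: "g \<in> carrier_vec N" and \<Lambda>: "\<Lambda> > 0"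
    and up: "\<And>x. x \<in> carrier_vec N \<Longrightarrow> x \<bullet> (B *\<^sub>v x) \<le> \<Lambda> * (x \<bullet> x)"
  shows "g \<bullet> g \<le> \<Lambda>\<^sup>2 * ((mat_inv B *\<^sub>v g) \<bullet> (mat_inv B *\<^sub>v g))"
proof -
  define z where "z = mat_inv B *\<^sub>v g"
  have z: "z \<in> carrier_vec N" unfolding z_def using sym_posdef_mat_inv(1)[OF B] g by simp
  have Bz: "B *\<^sub>v z = g" unfolding z_def using sym_posdef_mat_inv_cancel[OF B g] by simp
  note psd = sym_posdef_imp_sym_psd[OF B]
  have "(g \<bullet> g)\<^sup>2 \<le> (g \<bullet> (B *\<^sub>v g)) * (z \<bullet> g)"
    using sym_psd_cauchy_schwarz[OF psd g z] Bz by simp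
  also have "\<dots> \<le> (\<Lambda> * (g \<bullet> g)) * (z \<bullet> g)"
    using up[OF g] psd z Bz unfolding sym_psd_def by (intro mult_right_mono) auto
  finally have gz: "(g \<bullet> g) * (g \<bullet> g) \<le> (\<Lambda> * (z \<bullet> g)) * (g \<bullet> g)"
    by (simp add: power2_eq_square algebra_simps)
  show ?thesis
  proof (cases "g \<bullet> g = 0")
    case False
    then have gg: "g \<bullet> g > 0" using scalar_prod_self_nonneg[of g] by simp
    with gz have "g \<bullet> g \<le> \<Lambda> * (z \<bullet> g)" by simp
    then have "(g \<bullet> g)\<^sup>2 \<le> \<Lambda>\<^sup>2 * (z \<bullet> g)\<^sup>2"
      using gg by (metis power_mono power_mult_distrib less_imp_le)
    also have "\<dots> \<le> \<Lambda>\<^sup>2 * ((z \<bullet> z) * (g \<bullet> g))"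
      using cauchy_schwarz_vec[OF z g] by (simp add: mult_left_mono)
    finally have "(g \<bullet> g) * (g \<bullet> g) \<le> (\<Lambda>\<^sup>2 * (z \<bullet> z)) * (g \<bullet> g)"
      by (simp add: power2_eq_square algebra_simps)
    then show ?thesis using gg unfolding z_def by simp
  qed (simp add: scalar_prod_self_nonneg)
qed

lemma mat_inv_norm_upper:
  fixes A :: "real mat"
  assumes A: "sym_posdef A N" and g: "g \<in> carrier_vec N" and a: "a > 0"
    and low: "\<And>x. x \<in> carrier_vec N \<Longrightarrow> a * (x \<bullet> x) \<le> x \<bullet> (A *\<^sub>v x)"
  shows "a\<^sup>2 * ((mat_inv A *\<^sub>v g) \<bullet> (mat_inv A *\<^sub>v g)) \<le> g \<bullet> g"
proof -
  define w where "w = mat_inv A *\<^sub>v g"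
  have w: "w \<in> carrier_vec N" unfolding w_def using sym_posdef_mat_inv(1)[OF A] g by simp
  have "A *\<^sub>v w = g" unfolding w_def using sym_posdef_mat_inv_cancel[OF A g] by simp
  then have aw: "a * (w \<bullet> w) \<le> w \<bullet> g" using low[OF w] by simp
  show ?thesis
  proof (cases "w \<bullet> w = 0")
    case False
    then have ww: "w \<bullet> w > 0" using scalar_prod_self_nonneg[of w] by simp
    have "(a * (w \<bullet> w))\<^sup>2 \<le> (w \<bullet> g)\<^sup>2" using aw a ww by (intro power_mono) auto
    also have "\<dots> \<le> (w \<bullet> w) * (g \<bullet> g)" by (rule cauchy_schwarz_vec[OF w g])
    finally have "(a\<^sup>2 * (w \<bullet> w)) * (w \<bullet> w) \<le> (g \<bullet> g) * (w \<bullet> w)"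
      by (simp add: power2_eq_square algebra_simps)
    then show ?thesis using ww unfolding w_def by simp
  qed (simp add: w_def[symmetric] scalar_prod_self_nonneg)
qed

text \<open>The two inverses are compared through the resolvent identity
  \<open>A\<^sup>-\<^sup>1 - (A + D)\<^sup>-\<^sup>1 = A\<^sup>-\<^sup>1 D (A + D)\<^sup>-\<^sup>1\<close>, in its two vector forms.\<close>

locale psd_update =
  fixes N :: nat and A D :: "real mat"
  assumes A: "sym_posdef A N" and D: "sym_psd D N"
begin

lemma update_carrier: "A \<in> carrier_mat N N" "D \<in> carrier_mat N N" "transpose_mat D = D"
  using A D unfolding sym_posdef_def sym_psd_def by auto

lemma sum_sym_posdef: "sym_posdef (A + D) N"
  by (rule sym_posdef_add_sym_psd[OF A D])

lemma mat_inv_mult_vec_eq_add: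
  assumes e: "e \<in> carrier_vec N"
  shows "mat_inv A *\<^sub>v e = mat_inv (A + D) *\<^sub>v e + mat_inv A *\<^sub>v (D *\<^sub>v (mat_inv (A + D) *\<^sub>v e))"
proof -
  let ?w = "mat_inv (A + D) *\<^sub>v e"
  let ?v = "mat_inv A *\<^sub>v (D *\<^sub>v ?w)"
  have w: "?w \<in> carrier_vec N" and v: "?v \<in> carrier_vec N"
    using sym_posdef_mat_inv(1)[OF sum_sym_posdef] sym_posdef_mat_inv(1)[OF A] update_carrier e by auto
  have "A *\<^sub>v (?w + ?v) = A *\<^sub>v ?w + D *\<^sub>v ?w"
    using update_carrier w v sym_posdef_mat_inv_cancel(2)[OF A, of "D *\<^sub>v ?w"]
    by (simp add: mult_add_distrib_mat_vec)
  also have "\<dots> = e"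
    using update_carrier w sym_posdef_mat_inv_cancel(2)[OF sum_sym_posdef e]
    by (simp add: add_mult_distrib_mat_vec)
  finally show ?thesis using sym_posdef_mat_inv_cancel(1)[OF A, of "?w + ?v"] w v by simp
qed

lemma mat_inv_add_mult_vec_eq_diff:
  assumes e: "e \<in> carrier_vec N"
  shows "mat_inv (A + D) *\<^sub>v e = mat_inv A *\<^sub>v e - mat_inv (A + D) *\<^sub>v (D *\<^sub>v (mat_inv A *\<^sub>v e))"
proof -
  let ?y = "mat_inv A *\<^sub>v e"
  let ?u = "mat_inv (A + D) *\<^sub>v (D *\<^sub>v ?y)"
  have y: "?y \<in> carrier_vec N" and u: "?u \<in> carrier_vec N"
    using sym_posdef_mat_inv(1)[OF sum_sym_posdef] sym_posdef_mat_inv(1)[OF A] update_carrier e by auto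
  have "(A + D) *\<^sub>v (?y - ?u) = (A + D) *\<^sub>v ?y - (A + D) *\<^sub>v ?u"
    using update_carrier y u by (intro mult_minus_distrib_mat_vec[of _ N N]) auto
  also have "\<dots> = (e + D *\<^sub>v ?y) - D *\<^sub>v ?y"
    using update_carrier y sym_posdef_mat_inv_cancel(2)[OF sum_sym_posdef, of "D *\<^sub>v ?y"]
      sym_posdef_mat_inv_cancel(2)[OF A e]
    by (simp add: add_mult_distrib_mat_vec)
  also have "\<dots> = e" using update_carrier y e by (intro eq_vecI) auto
  finally show ?thesis
    using sym_posdef_mat_inv_cancel(1)[OF sum_sym_posdef, of "?y - ?u"] y u by simp
qed

lemma form_mat_inv_diff_new:
  assumes e: "e \<in> carrier_vec N"
  defines "w \<equiv> mat_inv (A + D) *\<^sub>v e"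
  shows "e \<bullet> (mat_inv A *\<^sub>v e) - e \<bullet> w = w \<bullet> (D *\<^sub>v w) + (D *\<^sub>v w) \<bullet> (mat_inv A *\<^sub>v (D *\<^sub>v w))"
proof -
  let ?v = "mat_inv A *\<^sub>v (D *\<^sub>v w)"
  note Ai = sym_posdef_mat_inv(1)[OF A] and Bi = sym_posdef_mat_inv(1)[OF sum_sym_posdef]
  have w: "w \<in> carrier_vec N" and Dw: "D *\<^sub>v w \<in> carrier_vec N" and v: "?v \<in> carrier_vec N"
    unfolding w_def using Ai Bi update_carrier e by auto
  have y: "mat_inv A *\<^sub>v e = w + ?v" unfolding w_def by (rule mat_inv_mult_vec_eq_add[OF e])
  have "e \<bullet> ?v = (mat_inv A *\<^sub>v e) \<bullet> (D *\<^sub>v w)"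
    by (rule sym_mat_scalar_prod_swap[OF Ai sym_posdef_mat_inv_sym[OF A] e Dw])
  also have "\<dots> = w \<bullet> (D *\<^sub>v w) + (D *\<^sub>v w) \<bullet> ?v"
    unfolding y using w v Dw by (simp add: add_scalar_prod_distrib[of _ N] comm_scalar_prod[of ?v N])
  finally show ?thesis
    unfolding y using e w v by (simp add: scalar_prod_add_distrib[of e N])
qed

lemma form_mat_inv_diff_old:
  assumes e: "e \<in> carrier_vec N"
  defines "y \<equiv> mat_inv A *\<^sub>v e"
  shows "e \<bullet> y - e \<bullet> (mat_inv (A + D) *\<^sub>v e) = y \<bullet> (D *\<^sub>v y) - (D *\<^sub>v y) \<bullet> (mat_inv (A + D) *\<^sub>v (D *\<^sub>v y))"
proof -
  let ?u = "mat_inv (A + D) *\<^sub>v (D *\<^sub>v y)"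
  note Ai = sym_posdef_mat_inv(1)[OF A] and Bi = sym_posdef_mat_inv(1)[OF sum_sym_posdef]
  have y: "y \<in> carrier_vec N" and Dy: "D *\<^sub>v y \<in> carrier_vec N" and u: "?u \<in> carrier_vec N"
    unfolding y_def using Ai Bi update_carrier e by auto
  have w: "mat_inv (A + D) *\<^sub>v e = y - ?u" unfolding y_def by (rule mat_inv_add_mult_vec_eq_diff[OF e])
  have "e \<bullet> ?u = (mat_inv (A + D) *\<^sub>v e) \<bullet> (D *\<^sub>v y)"
    by (rule sym_mat_scalar_prod_swap[OF Bi sym_posdef_mat_inv_sym[OF sum_sym_posdef] e Dy])
  also have "\<dots> = y \<bullet> (D *\<^sub>v y) - (D *\<^sub>v y) \<bullet> ?u"
    unfolding w using y u Dy by (simp add: minus_scalar_prod_distrib[of _ N] comm_scalar_prod[of ?u N])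
  finally show ?thesis
    unfolding w using e y u by (simp add: scalar_prod_minus_distrib[of e N])
qed

text \<open>With \<open>x = (A + D)\<^sup>-\<^sup>1 D y\<close>, \<open>R = x \<bullet> D y\<close> and \<open>P = x \<bullet> D x\<close>: the spectral bounds give
  \<open>\<Lambda> P \<le> (\<Lambda> - a) R\<close>, and Cauchy-Schwarz for \<open>D\<close> gives \<open>R\<^sup>2 \<le> P (y \<bullet> D y)\<close>.\<close>

lemma form_sandwich_le:
  assumes y: "y \<in> carrier_vec N" and a: "0 < a" "a \<le> \<Lambda>"
    and low: "\<And>x. x \<in> carrier_vec N \<Longrightarrow> a * (x \<bullet> x) \<le> x \<bullet> (A *\<^sub>v x)"
    and up: "\<And>x. x \<in> carrier_vec N \<Longrightarrow> x \<bullet> (D *\<^sub>v x) \<le> (\<Lambda> - a) * (x \<bullet> x)"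
  shows "(D *\<^sub>v y) \<bullet> (mat_inv (A + D) *\<^sub>v (D *\<^sub>v y)) \<le> (1 - a / \<Lambda>) * (y \<bullet> (D *\<^sub>v y))"
proof -
  define x where "x = mat_inv (A + D) *\<^sub>v (D *\<^sub>v y)"
  define R where "R = (D *\<^sub>v y) \<bullet> x"
  define P where "P = x \<bullet> (D *\<^sub>v x)"
  define Q where "Q = y \<bullet> (D *\<^sub>v y)"
  have Dy: "D *\<^sub>v y \<in> carrier_vec N" using update_carrier y by simp
  have x: "x \<in> carrier_vec N" unfolding x_def using sym_posdef_mat_inv(1)[OF sum_sym_posdef] Dy by simp
  have Bx: "(A + D) *\<^sub>v x = D *\<^sub>v y" unfolding x_def using sym_posdef_mat_inv_cancel(2)[OF sum_sym_posdef Dy] .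
  have P: "P \<ge> 0" and Q: "Q \<ge> 0" using D x y unfolding P_def Q_def sym_psd_def by auto
  have "R = x \<bullet> ((A + D) *\<^sub>v x)" unfolding R_def Bx using comm_scalar_prod[OF Dy x] .
  then have R_ge: "a * (x \<bullet> x) + P \<le> R"
    unfolding P_def using low[OF x] scalar_prod_add_mult_mat_vec[OF update_carrier(1,2) x x] by simp
  have "R\<^sup>2 \<le> P * Q"
    using sym_psd_cauchy_schwarz[OF D x y] comm_scalar_prod[OF Dy x] unfolding R_def P_def Q_def by simp
  have "\<Lambda> * P \<le> (\<Lambda> - a) * (a * (x \<bullet> x) + P)"
    using mult_left_mono[OF up[OF x], of a] a unfolding P_def by (simp add: algebra_simps)
  also have "\<dots> \<le> (\<Lambda> - a) * R" using R_ge a by (intro mult_left_mono) auto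
  finally have \<Lambda>P: "\<Lambda> * P \<le> (\<Lambda> - a) * R" .
  have R0: "R \<ge> 0" using R_ge P a scalar_prod_self_nonneg[of x] by (smt (verit) mult_nonneg_nonneg)
  have "R \<le> (1 - a / \<Lambda>) * Q"
  proof (cases "R = 0")
    case False
    with R0 have "R > 0" by simp
    have "\<Lambda> * R * R \<le> (\<Lambda> * P) * Q" using \<open>R\<^sup>2 \<le> P * Q\<close> a
      by (simp add: power2_eq_square mult_left_mono mult.assoc)
    also have "\<dots> \<le> ((\<Lambda> - a) * R) * Q" using \<Lambda>P Q by (rule mult_right_mono)
    finally have "(\<Lambda> * R) * R \<le> ((\<Lambda> - a) * Q) * R" by (simp add: mult_ac)
    then have "\<Lambda> * R \<le> (\<Lambda> - a) * Q" using \<open>R > 0\<close> by (simp add: mult_le_cancel_right_pos)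
    then show ?thesis using a by (simp add: field_simps)
  qed (use a Q in simp)
  then show ?thesis unfolding R_def Q_def x_def .
qed

lemma trace_mat_inv_diff:
  "mat_trace (mat_inv A) - mat_trace (mat_inv (A + D))
     = (\<Sum>j<N. unit_vec N j \<bullet> (mat_inv A *\<^sub>v unit_vec N j)
              - unit_vec N j \<bullet> (mat_inv (A + D) *\<^sub>v unit_vec N j))"
  using mat_trace_unit_vec[OF sym_posdef_mat_inv(1)[OF A]]
    mat_trace_unit_vec[OF sym_posdef_mat_inv(1)[OF sum_sym_posdef]]
  by (simp add: sum_subtractf)

lemma trace_mat_inv_diff_ge:
  "(\<Sum>j<N. (mat_inv (A + D) *\<^sub>v unit_vec N j) \<bullet> (D *\<^sub>v (mat_inv (A + D) *\<^sub>v unit_vec N j)))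
     \<le> mat_trace (mat_inv A) - mat_trace (mat_inv (A + D))"
  unfolding trace_mat_inv_diff
proof (rule sum_mono)
  fix j
  let ?w = "mat_inv (A + D) *\<^sub>v unit_vec N j"
  have "D *\<^sub>v ?w \<in> carrier_vec N" using update_carrier sym_posdef_mat_inv(1)[OF sum_sym_posdef] by simp
  then have "(D *\<^sub>v ?w) \<bullet> (mat_inv A *\<^sub>v (D *\<^sub>v ?w)) \<ge> 0"
    using sym_posdef_imp_sym_psd[OF sym_posdef_mat_inv_sym_posdef[OF A]] unfolding sym_psd_def by blast
  then show "?w \<bullet> (D *\<^sub>v ?w) \<le> unit_vec N j \<bullet> (mat_inv A *\<^sub>v unit_vec N j) - unit_vec N j \<bullet> ?w"
    using form_mat_inv_diff_new[of "unit_vec N j"] by simp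
qed

lemma trace_mat_inv_diff_le:
  "mat_trace (mat_inv A) - mat_trace (mat_inv (A + D))
     \<le> (\<Sum>j<N. (mat_inv A *\<^sub>v unit_vec N j) \<bullet> (D *\<^sub>v (mat_inv A *\<^sub>v unit_vec N j)))"
  unfolding trace_mat_inv_diff
proof (rule sum_mono)
  fix j
  let ?y = "mat_inv A *\<^sub>v unit_vec N j"
  have "D *\<^sub>v ?y \<in> carrier_vec N" using update_carrier sym_posdef_mat_inv(1)[OF A] by simp
  then have "(D *\<^sub>v ?y) \<bullet> (mat_inv (A + D) *\<^sub>v (D *\<^sub>v ?y)) \<ge> 0"
    using sym_posdef_imp_sym_psd[OF sym_posdef_mat_inv_sym_posdef[OF sum_sym_posdef]]
    unfolding sym_psd_def by blast
  then show "unit_vec N j \<bullet> ?y - unit_vec N j \<bullet> (mat_inv (A + D) *\<^sub>v unit_vec N j) \<le> ?y \<bullet> (D *\<^sub>v ?y)"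
    using form_mat_inv_diff_old[of "unit_vec N j"] by simp
qed

lemma trace_mat_inv_diff_ge_ratio:
  assumes a: "0 < a" "a \<le> \<Lambda>"
    and low: "\<And>x. x \<in> carrier_vec N \<Longrightarrow> a * (x \<bullet> x) \<le> x \<bullet> (A *\<^sub>v x)"
    and up: "\<And>x. x \<in> carrier_vec N \<Longrightarrow> x \<bullet> (D *\<^sub>v x) \<le> (\<Lambda> - a) * (x \<bullet> x)"
  shows "a / \<Lambda> * (\<Sum>j<N. (mat_inv A *\<^sub>v unit_vec N j) \<bullet> (D *\<^sub>v (mat_inv A *\<^sub>v unit_vec N j)))
     \<le> mat_trace (mat_inv A) - mat_trace (mat_inv (A + D))"
  unfolding trace_mat_inv_diff sum_distrib_left
proof (rule sum_mono)
  fix j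
  let ?y = "mat_inv A *\<^sub>v unit_vec N j"
  have y: "?y \<in> carrier_vec N" using sym_posdef_mat_inv(1)[OF A] by simp
  show "a / \<Lambda> * (?y \<bullet> (D *\<^sub>v ?y))
      \<le> unit_vec N j \<bullet> ?y - unit_vec N j \<bullet> (mat_inv (A + D) *\<^sub>v unit_vec N j)"
    using form_mat_inv_diff_old[of "unit_vec N j"] form_sandwich_le[OF y a low up]
    by (simp add: algebra_simps)
qed

end

section \<open>Submodularity ratio and curvature\<close>

lemma submod_ratio_geI:
  assumes "\<And>\<Omega> S. \<Omega> \<subseteq> I \<Longrightarrow> S \<subseteq> I \<Longrightarrow> \<gamma> * rho f \<Omega> S \<le> (\<Sum>\<omega>\<in>\<Omega> - S. rho f {\<omega>} S)"
  shows "ereal \<gamma> \<le> submod_ratio f I"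
  unfolding submod_ratio_def using assms by (intro Sup_upper) auto

lemma curvature_leI:
  assumes "\<And>\<Omega> S j. \<Omega> \<subseteq> I \<Longrightarrow> S \<subseteq> I \<Longrightarrow> j \<in> S - \<Omega> \<Longrightarrow>
      (1 - \<alpha>) * rho f {j} (S - {j}) \<le> rho f {j} (S - {j} \<union> \<Omega>)"
  shows "curvature f I \<le> ereal \<alpha>"
  unfolding curvature_def using assms by (intro Inf_lower) auto

lemma submod_ratio_cong:
  assumes "\<And>S. S \<subseteq> I \<Longrightarrow> f S = f' S"
  shows "submod_ratio f I = submod_ratio f' I"
proof -
  have "rho f \<Omega> S = rho f' \<Omega> S" if "\<Omega> \<subseteq> I" "S \<subseteq> I" for \<Omega> S
    using that assms by (simp add: rho_def)
  moreover have "(\<Sum>\<omega>\<in>\<Omega> - S. rho f {\<omega>} S) = (\<Sum>\<omega>\<in>\<Omega> - S. rho f' {\<omega>} S)" if "\<Omega> \<subseteq> I" "S \<subseteq> I" for \<Omega> S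
    using that assms by (intro sum.cong) (auto simp: rho_def)
  ultimately show ?thesis unfolding submod_ratio_def by simp
qed

lemma curvature_cong:
  assumes "\<And>S. S \<subseteq> I \<Longrightarrow> f S = f' S"
  shows "curvature f I = curvature f' I"
proof -
  have rho_eq: "rho f {j} S = rho f' {j} S" if "j \<in> I" "S \<subseteq> I" for j S
    using that assms by (simp add: rho_def)
  have "rho f {j} (S - {j}) = rho f' {j} (S - {j}) \<and> rho f {j} (S - {j} \<union> \<Omega>) = rho f' {j} (S - {j} \<union> \<Omega>)"
    if "\<Omega> \<subseteq> I" "S \<subseteq> I" "j \<in> S - \<Omega>" for \<Omega> S j
    using that by (intro conjI rho_eq) auto
  then show ?thesis unfolding curvature_def by simp
qed

section \<open>The smoothing error as a set function\<close>

lemma sum_Times_singletons: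
  assumes "finite A" "finite B"
  shows "(\<Sum>k\<in>A \<times> B. h k) = (\<Sum>a\<in>A. \<Sum>k\<in>{a} \<times> B. h k)"
proof -
  have "A \<times> B = (\<Union>a\<in>A. {a} \<times> B)" by auto
  then show ?thesis using assms by (simp only:) (rule sum.UNION_disjoint; auto)
qed

locale selection_mse =
  fixes N :: nat and L :: "real mat" and g :: "nat \<times> 'b \<Rightarrow> real vec" and T :: "'b set" and I :: "nat set"
  assumes N_pos: "0 < N" and L: "sym_posdef L N" and g: "\<And>k. g k \<in> carrier_vec N"
    and finite_T: "finite T" and finite_I: "finite I"
begin

definition U :: "nat set \<Rightarrow> real mat" where
  "U S = outer_sum N g (S \<times> T)"

definition J :: "nat set \<Rightarrow> real" where
  "J S = mat_trace (mat_inv (L + U S))"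

definition f :: "nat set \<Rightarrow> real" where
  "f S = J {} - J S"

definition lmin :: real where
  "lmin = lambda_min L"

definition lmax :: real where
  "lmax = lambda_max (L + U I)"

lemma L_carrier: "L \<in> carrier_mat N N" "transpose_mat L = L"
  using L unfolding sym_posdef_def by auto

lemma U_sym_psd: "sym_psd (U S) N"
  unfolding U_def by (rule outer_sum_sym_psd)

lemma M_sym_posdef: "sym_posdef (L + U S) N"
  using sym_posdef_add_sym_psd[OF L U_sym_psd] .

lemma M_carrier: "L + U S \<in> carrier_mat N N" "transpose_mat (L + U S) = L + U S"
  using M_sym_posdef unfolding sym_posdef_def by auto

lemma M_union:
  assumes "finite S" "finite S'" "S \<inter> S' = {}"
  shows "L + U (S \<union> S') = (L + U S) + U S'"
proof -
  have "U (S \<union> S') = U S + U S'"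
    unfolding U_def Sigma_Un_distrib1 using assms finite_T by (intro outer_sum_union) auto
  then show ?thesis using L_carrier by (simp add: U_def assoc_add_mat[of _ N N])
qed

lemma form_U_mono:
  assumes "S \<subseteq> S'" "finite S'" "x \<in> carrier_vec N"
  shows "x \<bullet> (U S *\<^sub>v x) \<le> x \<bullet> (U S' *\<^sub>v x)"
  unfolding U_def quadratic_form_outer_sum[OF assms(3)]
  using assms finite_T by (intro sum_mono2) auto

lemma form_L_ge: "x \<in> carrier_vec N \<Longrightarrow> lmin * (x \<bullet> x) \<le> x \<bullet> (L *\<^sub>v x)"
  unfolding lmin_def using lambda_min_le_quadratic_form[OF L_carrier N_pos] .

lemma form_M_split:
  assumes "x \<in> carrier_vec N"
  shows "x \<bullet> ((L + U S) *\<^sub>v x) = x \<bullet> (L *\<^sub>v x) + x \<bullet> (U S *\<^sub>v x)"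
  using U_sym_psd assms unfolding sym_psd_def by (intro scalar_prod_add_mult_mat_vec[OF L_carrier(1)]) auto

lemma form_M_ge:
  assumes x: "x \<in> carrier_vec N"
  shows "lmin * (x \<bullet> x) \<le> x \<bullet> ((L + U S) *\<^sub>v x)"
proof -
  have "0 \<le> x \<bullet> (U S *\<^sub>v x)" using U_sym_psd[of S] x unfolding sym_psd_def by blast
  then show ?thesis using form_L_ge[OF x] form_M_split[OF x, of S] by linarith
qed

lemma form_M_le:
  assumes S: "S \<subseteq> I" and x: "x \<in> carrier_vec N"
  shows "x \<bullet> ((L + U S) *\<^sub>v x) \<le> lmax * (x \<bullet> x)"
proof -
  have "x \<bullet> ((L + U S) *\<^sub>v x) \<le> x \<bullet> ((L + U I) *\<^sub>v x)"
    using form_U_mono[OF S finite_I x] unfolding form_M_split[OF x] by simp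
  also have "\<dots> \<le> lmax * (x \<bullet> x)"
    unfolding lmax_def using lambda_max_ge_quadratic_form[OF M_carrier N_pos x] .
  finally show ?thesis .
qed

lemma form_U_singleton_le:
  assumes "\<omega> \<in> I" "x \<in> carrier_vec N"
  shows "x \<bullet> (U {\<omega>} *\<^sub>v x) \<le> (lmax - lmin) * (x \<bullet> x)"
  using form_M_le[of "{\<omega>}" x] form_L_ge[of x] form_M_split[of x "{\<omega>}"] assms
  by (simp add: algebra_simps)

lemma lmin_pos: "0 < lmin"
  unfolding lmin_def using lambda_min_pos[OF L N_pos] .

lemma lmin_le_lmax: "lmin \<le> lmax"
proof -
  let ?e = "unit_vec N 0 :: real vec"
  have "?e \<bullet> ?e = 1" using N_pos by simp
  then show ?thesis using form_M_ge[of ?e I] form_M_le[of I ?e] by simp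
qed

lemma lmax_pos: "0 < lmax"
  using lmin_pos lmin_le_lmax by simp

lemma rho_f: "rho f \<Omega> S = J S - J (S \<union> \<Omega>)"
  unfolding rho_def f_def by simp

lemma M_union_diff:
  assumes "S \<subseteq> I" "\<Omega> \<subseteq> I"
  shows "L + U (S \<union> \<Omega>) = (L + U S) + U (\<Omega> - S)"
proof -
  have "S \<union> \<Omega> = S \<union> (\<Omega> - S)" by auto
  moreover have "finite S" "finite (\<Omega> - S)" using assms finite_I by (auto intro: finite_subset)
  ultimately show ?thesis using M_union[of S "\<Omega> - S"] by auto
qed

lemma gain_ge:
  assumes "S \<subseteq> I" "\<Omega> \<subseteq> I"
  shows "(\<Sum>k\<in>(\<Omega> - S) \<times> T. (mat_inv (L + U (S \<union> \<Omega>)) *\<^sub>v g k) \<bullet> (mat_inv (L + U (S \<union> \<Omega>)) *\<^sub>v g k))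
       \<le> J S - J (S \<union> \<Omega>)"
proof -
  interpret psd_update N "L + U S" "U (\<Omega> - S)"
    by unfold_locales (rule M_sym_posdef, rule U_sym_psd)
  let ?Bi = "mat_inv (L + U (S \<union> \<Omega>))"
  have "(\<Sum>j<N. (?Bi *\<^sub>v unit_vec N j) \<bullet> (U (\<Omega> - S) *\<^sub>v (?Bi *\<^sub>v unit_vec N j)))
      = (\<Sum>k\<in>(\<Omega> - S) \<times> T. (?Bi *\<^sub>v g k) \<bullet> (?Bi *\<^sub>v g k))"
    unfolding U_def[of "\<Omega> - S"]
    by (rule sum_sandwich_outer_sum[OF sym_posdef_mat_inv(1) sym_posdef_mat_inv_sym, OF M_sym_posdef M_sym_posdef g])
  then show ?thesis
    using trace_mat_inv_diff_ge unfolding J_def M_union_diff[OF assms] by simp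
qed

lemma gain_le:
  assumes "S \<subseteq> I" "\<Omega> \<subseteq> I"
  shows "J S - J (S \<union> \<Omega>)
       \<le> (\<Sum>k\<in>(\<Omega> - S) \<times> T. (mat_inv (L + U S) *\<^sub>v g k) \<bullet> (mat_inv (L + U S) *\<^sub>v g k))"
proof -
  interpret psd_update N "L + U S" "U (\<Omega> - S)"
    by unfold_locales (rule M_sym_posdef, rule U_sym_psd)
  let ?Ai = "mat_inv (L + U S)"
  have "(\<Sum>j<N. (?Ai *\<^sub>v unit_vec N j) \<bullet> (U (\<Omega> - S) *\<^sub>v (?Ai *\<^sub>v unit_vec N j)))
      = (\<Sum>k\<in>(\<Omega> - S) \<times> T. (?Ai *\<^sub>v g k) \<bullet> (?Ai *\<^sub>v g k))"
    unfolding U_def[of "\<Omega> - S"]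
    by (rule sum_sandwich_outer_sum[OF sym_posdef_mat_inv(1) sym_posdef_mat_inv_sym, OF M_sym_posdef M_sym_posdef g])
  then show ?thesis
    using trace_mat_inv_diff_le unfolding J_def M_union_diff[OF assms] by simp
qed

lemma gain_singleton_ge_ratio:
  assumes "S \<subseteq> I" "\<omega> \<in> I" "\<omega> \<notin> S"
  shows "lmin / lmax * (\<Sum>k\<in>{\<omega>} \<times> T. (mat_inv (L + U S) *\<^sub>v g k) \<bullet> (mat_inv (L + U S) *\<^sub>v g k))
       \<le> J S - J (S \<union> {\<omega>})"
proof -
  interpret psd_update N "L + U S" "U {\<omega>}"
    by unfold_locales (rule M_sym_posdef, rule U_sym_psd)
  let ?Ai = "mat_inv (L + U S)"
  have "(\<Sum>j<N. (?Ai *\<^sub>v unit_vec N j) \<bullet> (U {\<omega>} *\<^sub>v (?Ai *\<^sub>v unit_vec N j)))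
      = (\<Sum>k\<in>{\<omega>} \<times> T. (?Ai *\<^sub>v g k) \<bullet> (?Ai *\<^sub>v g k))"
    unfolding U_def[of "{\<omega>}"]
    by (rule sum_sandwich_outer_sum[OF sym_posdef_mat_inv(1) sym_posdef_mat_inv_sym, OF M_sym_posdef M_sym_posdef g])
  moreover have "L + U (S \<union> {\<omega>}) = (L + U S) + U {\<omega>}"
    using M_union_diff[of S "{\<omega>}"] assms by (simp add: insert_Diff_if)
  ultimately show ?thesis
    using trace_mat_inv_diff_ge_ratio[OF lmin_pos lmin_le_lmax form_M_ge form_U_singleton_le[OF assms(2)]]
    unfolding J_def by simp
qed

lemma gain_singleton_bounds:
  assumes "S \<subseteq> I" "j \<in> I" "j \<notin> S"
  shows "(\<Sum>k\<in>{j} \<times> T. g k \<bullet> g k) / lmax\<^sup>2 \<le> J S - J (S \<union> {j})"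
    and "J S - J (S \<union> {j}) \<le> (\<Sum>k\<in>{j} \<times> T. g k \<bullet> g k) / lmin\<^sup>2"
proof -
  have j: "{j} - S = {j}" using assms by auto
  have "(g k \<bullet> g k) / lmax\<^sup>2 \<le> (mat_inv (L + U (S \<union> {j})) *\<^sub>v g k) \<bullet> (mat_inv (L + U (S \<union> {j})) *\<^sub>v g k)" for k
    using mat_inv_norm_lower[OF M_sym_posdef g lmax_pos form_M_le] assms lmax_pos
    by (simp add: field_simps)
  then have "(\<Sum>k\<in>{j} \<times> T. g k \<bullet> g k) / lmax\<^sup>2
      \<le> (\<Sum>k\<in>{j} \<times> T. (mat_inv (L + U (S \<union> {j})) *\<^sub>v g k) \<bullet> (mat_inv (L + U (S \<union> {j})) *\<^sub>v g k))"
    unfolding sum_divide_distrib by (rule sum_mono)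
  also have "\<dots> \<le> J S - J (S \<union> {j})" using gain_ge[of S "{j}"] assms j by simp
  finally show "(\<Sum>k\<in>{j} \<times> T. g k \<bullet> g k) / lmax\<^sup>2 \<le> J S - J (S \<union> {j})" .
  have "J S - J (S \<union> {j}) \<le> (\<Sum>k\<in>{j} \<times> T. (mat_inv (L + U S) *\<^sub>v g k) \<bullet> (mat_inv (L + U S) *\<^sub>v g k))"
    using gain_le[of S "{j}"] assms j by simp
  also have "\<dots> \<le> (\<Sum>k\<in>{j} \<times> T. g k \<bullet> g k) / lmin\<^sup>2"
    unfolding sum_divide_distrib
  proof (rule sum_mono)
    fix k
    show "(mat_inv (L + U S) *\<^sub>v g k) \<bullet> (mat_inv (L + U S) *\<^sub>v g k) \<le> (g k \<bullet> g k) / lmin\<^sup>2"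
      using mat_inv_norm_upper[OF M_sym_posdef g lmin_pos form_M_ge] lmin_pos
      by (simp add: field_simps)
  qed
  finally show "J S - J (S \<union> {j}) \<le> (\<Sum>k\<in>{j} \<times> T. g k \<bullet> g k) / lmin\<^sup>2" .
qed

lemma f_mono:
  assumes "S1 \<subseteq> S2" "S2 \<subseteq> I"
  shows "f S1 \<le> f S2"
proof -
  have "0 \<le> J S1 - J (S1 \<union> S2)"
    using gain_ge[of S1 S2] assms scalar_prod_self_nonneg
    by (meson order_trans subset_trans sum_nonneg)
  then show ?thesis using assms unfolding f_def by (simp add: Un_absorb1)
qed

text \<open>The information carried by \<open>\<Omega>\<close> splits sensor by sensor, each term being at most
  \<open>lmax / lmin\<close> times the corresponding single-sensor gain.\<close>

lemma submod_ratio_ge: "ereal (lmin / lmax) \<le> submod_ratio f I"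
proof (rule submod_ratio_geI)
  fix \<Omega> S assume \<Omega>: "\<Omega> \<subseteq> I" and S: "S \<subseteq> I"
  let ?h = "\<lambda>k. (mat_inv (L + U S) *\<^sub>v g k) \<bullet> (mat_inv (L + U S) *\<^sub>v g k)"
  have "lmin / lmax * rho f \<Omega> S \<le> lmin / lmax * (\<Sum>k\<in>(\<Omega> - S) \<times> T. ?h k)"
    unfolding rho_f using gain_le[OF S \<Omega>] lmin_pos lmax_pos by (intro mult_left_mono) auto
  also have "\<dots> = (\<Sum>\<omega>\<in>\<Omega> - S. lmin / lmax * (\<Sum>k\<in>{\<omega>} \<times> T. ?h k))"
    using \<Omega> finite_I finite_T
    by (simp add: sum_Times_singletons[of "\<Omega> - S"] sum_distrib_left finite_subset)
  also have "\<dots> \<le> (\<Sum>\<omega>\<in>\<Omega> - S. rho f {\<omega>} S)"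
    unfolding rho_f using gain_singleton_ge_ratio S \<Omega> by (intro sum_mono) auto
  finally show "lmin / lmax * rho f \<Omega> S \<le> (\<Sum>\<omega>\<in>\<Omega> - S. rho f {\<omega>} S)" .
qed

text \<open>Every single-sensor gain lies between \<open>G / lmax\<^sup>2\<close> and \<open>G / lmin\<^sup>2\<close> for the same \<open>G\<close>.\<close>

lemma curvature_le: "curvature f I \<le> ereal (1 - lmin\<^sup>2 / lmax\<^sup>2)"
proof (rule curvature_leI)
  fix \<Omega> S j assume \<Omega>: "\<Omega> \<subseteq> I" and S: "S \<subseteq> I" and j: "j \<in> S - \<Omega>"
  let ?G = "\<Sum>k\<in>{j} \<times> T. g k \<bullet> g k"
  have "(1 - (1 - lmin\<^sup>2 / lmax\<^sup>2)) * rho f {j} (S - {j}) = lmin\<^sup>2 / lmax\<^sup>2 * rho f {j} (S - {j})"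
    by simp
  also have "\<dots> \<le> lmin\<^sup>2 / lmax\<^sup>2 * (?G / lmin\<^sup>2)"
    unfolding rho_f using gain_singleton_bounds(2)[of "S - {j}" j] S j by (intro mult_left_mono) auto
  also have "\<dots> = ?G / lmax\<^sup>2" using lmin_pos by (simp add: field_simps)
  also have "\<dots> \<le> rho f {j} (S - {j} \<union> \<Omega>)"
    unfolding rho_f using gain_singleton_bounds(1)[of "S - {j} \<union> \<Omega>" j] S \<Omega> j by auto
  finally show "(1 - (1 - lmin\<^sup>2 / lmax\<^sup>2)) * rho f {j} (S - {j}) \<le> rho f {j} (S - {j} \<union> \<Omega>)" .
qed

end

theorem theorem1:
  fixes n p l :: nat and A C X0 W :: "real mat" and \<sigma> :: "nat \<Rightarrow> real"
  assumes "n > 0" and "p > 0" and "l > 0"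
    and "A \<in> carrier_mat n n" and "C \<in> carrier_mat p n"
    and "sym_posdef X0 n" and "sym_posdef W n"
    and "\<forall>i < p. \<sigma> i > 0"
  shows "(\<forall>S1 S2. S1 \<subseteq> S2 \<longrightarrow> S2 \<subseteq> {..<p} \<longrightarrow>
             ffun n p l A C X0 W \<sigma> S1 \<le> ffun n p l A C X0 W \<sigma> S2)
    \<and> submod_ratio (ffun n p l A C X0 W \<sigma>) {..<p}
        \<ge> ereal (lambda_min (Lmat n l X0 W)
                 / lambda_max (Lmat n l X0 W + Umat n p l A C \<sigma> {..<p}))
    \<and> lambda_min (Lmat n l X0 W) / lambda_max (Lmat n l X0 W + Umat n p l A C \<sigma> {..<p}) > 0
    \<and> curvature (ffun n p l A C X0 W \<sigma>) {..<p}
        \<le> ereal (1 - (lambda_min (Lmat n l X0 W))\<^sup>2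
                   / (lambda_max (Lmat n l X0 W + Umat n p l A C \<sigma> {..<p}))\<^sup>2)
    \<and> 1 - (lambda_min (Lmat n l X0 W))\<^sup>2
          / (lambda_max (Lmat n l X0 W + Umat n p l A C \<sigma> {..<p}))\<^sup>2 < 1"
proof -
  interpret selection_mse "n * l" "Lmat n l X0 W" "obs_row n l A C \<sigma>" "{..<l}" "{..<p}"
    using assms by unfold_locales (auto simp: Lmat_sym_posdef)
  have U_eq: "Umat n p l A C \<sigma> S = U S" if "S \<subseteq> {..<p}" for S
    unfolding U_def using Umat_eq_outer_sum[OF assms(5,8) that] .
  have ffun_eq: "ffun n p l A C X0 W \<sigma> S = f S" if "S \<subseteq> {..<p}" for S
    using that U_eq[of "{}"] by (simp add: U_eq ffun_def Jfun_def f_def J_def)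
  have "lambda_min (Lmat n l X0 W) = lmin"
    and "lambda_max (Lmat n l X0 W + Umat n p l A C \<sigma> {..<p}) = lmax"
    by (simp_all add: lmin_def lmax_def U_eq)
  moreover have "submod_ratio (ffun n p l A C X0 W \<sigma>) {..<p} = submod_ratio f {..<p}"
    and "curvature (ffun n p l A C X0 W \<sigma>) {..<p} = curvature f {..<p}"
    using submod_ratio_cong[OF ffun_eq] curvature_cong[OF ffun_eq] by simp_all
  ultimately show ?thesis
    using f_mono ffun_eq submod_ratio_ge curvature_le lmin_pos lmax_pos by auto
qed

end
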